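(* Fix $\beta>2$ and let $F_\beta(\mathbf{x},r)$, $\mathbf{m}_i^\beta(r)$, $\boldsymbol{\sigma}_0^\beta(r)$ be as in the context, and let $h_0^\beta(r)=F_\beta(\boldsymbol{\sigma}_0^\beta(r),r)$. For every $r>0$, the connected components of the set $\{\mathbf{x}\in\Xi: F_\beta(\mathbf{x},r)<h_0^\beta(r)\}$ include two components $W_\beta(1,r)$ and $W_\beta(2,r)$ with $\mathbf{m}_i^\beta(r)\in W_\beta(i,r)$, $i=1,2$, and $\overline{W_\beta(1,r)}\cap\overline{W_\beta(2,r)}=\{\boldsymbol{\sigma}_0^\beta(r)\}$. For all sufficiently small $r>0$ there is an additional connected component $W_\beta(0,r)$ of this set, containing $\mathbf{m}_0^\beta(r)$ and satisfying $\overline{W_\beta(0,r)}\cap\overline{W_\beta(i,r)}=\varnothing$ for $i=1,2$.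
   Context: $\Xi=\{(x_1,x_2): x_1,x_2\ge0,\ x_1+x_2\le1\}$, $x_0=1-x_1-x_2$, $\mathbf{v}_k=(\cos(2\pi k/3),\sin(2\pi k/3))$, $F_\beta(\mathbf{x},r)=-\frac12|\sum_{k=0}^2x_k\mathbf{v}_k|^2+\frac1\beta\sum_{k=0}^2x_k\log(3x_k)+r\,x_0-\frac r2(x_1+x_2)$ (external field of magnitude $r$, angle $\pi$), with $0\log0=0$; $\overline{A}$ is the closure of $A$. Let $h(t)=-3t(1-2t)\log\frac{1-2t}{t}-3t+1$, $f_r(t)=\frac{2}{3(1-r-3t)}\log\frac{1-2t}{t}$, $k_r=(1-r)/3$; for $0<r<1$, $m_0(r)$ is the unique solution in $(0,k_r)$ of $h(t)=r$; $r_2^\beta$ is the unique $r\in(0,1)$ with $f_r(m_0(r))=\beta$. For every $r>0$, $q_\beta(r)$ is the unique solution of $f_r(t)=\beta$ in $(1/3,1/2)$ and $\boldsymbol{\sigma}_0^\beta(r)=(q_\beta(r),q_\beta(r))$. For $r\in(0,r_2^\beta)$, $p_\beta(r)$ is the unique solution of $f_r(t)=\beta$ in $(0,m_0(r))$ and $\mathbf{m}_0^\beta(r)=(p_\beta(r),p_\beta(r))$. Let $G_\beta(x)=\frac1\beta\log x-\frac32x$, $l_\beta=2/(3\beta)$, $g_\beta=G_\beta(l_\beta)$; for $y<g_\beta$, $H_\beta(y)<l_\beta<K_\beta(y)$ solve $G_\beta(x)=y$, and $H_\beta(g_\beta)=K_\beta(g_\beta)=l_\beta$. For $r>0$, $y_2^\beta(r)$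 is the unique $y\le g_\beta$ with $H_\beta(y-3r/2)+H_\beta(y)+K_\beta(y)=1$; $\mathbf{m}_1^\beta(r)=(H_\beta(y_2^\beta(r)),K_\beta(y_2^\beta(r)))$ and $\mathbf{m}_2^\beta(r)=(K_\beta(y_2^\beta(r)),H_\beta(y_2^\beta(r)))$. *)

theory Defs
  imports "HOL-Analysis.Analysis"
begin

text \<open>Points of the simplex Xi are pairs (x1, x2); x0 = 1 - x1 - x2.\<close>

definition Xi :: "(real \<times> real) set" where
  "Xi = {(x1, x2). 0 \<le> x1 \<and> 0 \<le> x2 \<and> x1 + x2 \<le> 1}"

definition vv :: "nat \<Rightarrow> real \<times> real" where
  "vv k = (cos (2 * pi * real k / 3), sin (2 * pi * real k / 3))"

definition ent :: "real \<Rightarrow> real" where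
  "ent t = (if t = 0 then 0 else t * ln (3 * t))"

definition Fb :: "real \<Rightarrow> real \<times> real \<Rightarrow> real \<Rightarrow> real" where
  "Fb \<beta> x r = (let x1 = fst x; x2 = snd x; x0 = 1 - x1 - x2 in
     - (1/2) * (norm (x0 *\<^sub>R vv 0 + x1 *\<^sub>R vv 1 + x2 *\<^sub>R vv 2))\<^sup>2
     + (1 / \<beta>) * (ent x0 + ent x1 + ent x2)
     + r * x0 - (r / 2) * (x1 + x2))"

definition hh :: "real \<Rightarrow> real" where
  "hh t = - 3 * t * (1 - 2 * t) * ln ((1 - 2 * t) / t) - 3 * t + 1"

definition ff :: "real \<Rightarrow> real \<Rightarrow> real" where
  "ff r t = 2 / (3 * (1 - r - 3 * t)) * ln ((1 - 2 * t) / t)"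

definition kk :: "real \<Rightarrow> real" where
  "kk r = (1 - r) / 3"

definition m0 :: "real \<Rightarrow> real" where
  "m0 r = (THE t. 0 < t \<and> t < kk r \<and> hh t = r)"

definition r2 :: "real \<Rightarrow> real" where
  "r2 \<beta> = (THE r. 0 < r \<and> r < 1 \<and> ff r (m0 r) = \<beta>)"

definition qb :: "real \<Rightarrow> real \<Rightarrow> real" where
  "qb \<beta> r = (THE t. 1/3 < t \<and> t < 1/2 \<and> ff r t = \<beta>)"

definition sigma0 :: "real \<Rightarrow> real \<Rightarrow> real \<times> real" where
  "sigma0 \<beta> r = (qb \<beta> r, qb \<beta> r)"

definition pb :: "real \<Rightarrow> real \<Rightarrow> real" where
  "pb \<beta> r = (THE t. 0 < t \<and> t < m0 r \<and> ff r t = \<beta>)"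

definition mvec0 :: "real \<Rightarrow> real \<Rightarrow> real \<times> real" where
  "mvec0 \<beta> r = (pb \<beta> r, pb \<beta> r)"

definition GG :: "real \<Rightarrow> real \<Rightarrow> real" where
  "GG \<beta> x = (1 / \<beta>) * ln x - (3/2) * x"

definition ll :: "real \<Rightarrow> real" where
  "ll \<beta> = 2 / (3 * \<beta>)"

definition gg :: "real \<Rightarrow> real" where
  "gg \<beta> = GG \<beta> (ll \<beta>)"

text \<open>For y \<le> g: H y is the solution in (0, l], K y the solution in [l, \<infinity>)
  (both equal l when y = g).\<close>
definition HH :: "real \<Rightarrow> real \<Rightarrow> real" where
  "HH \<beta> y = (THE x. 0 < x \<and> x \<le> ll \<beta> \<and> GG \<beta> x = y)"

definition KK :: "real \<Rightarrow> real \<Rightarrow> real" where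
  "KK \<beta> y = (THE x. ll \<beta> \<le> x \<and> GG \<beta> x = y)"

definition y2 :: "real \<Rightarrow> real \<Rightarrow> real" where
  "y2 \<beta> r = (THE y. y \<le> gg \<beta> \<and> HH \<beta> (y - 3 * r / 2) + HH \<beta> y + KK \<beta> y = 1)"

definition mvec1 :: "real \<Rightarrow> real \<Rightarrow> real \<times> real" where
  "mvec1 \<beta> r = (HH \<beta> (y2 \<beta> r), KK \<beta> (y2 \<beta> r))"

definition mvec2 :: "real \<Rightarrow> real \<Rightarrow> real \<times> real" where
  "mvec2 \<beta> r = (KK \<beta> (y2 \<beta> r), HH \<beta> (y2 \<beta> r))"

definition h0 :: "real \<Rightarrow> real \<Rightarrow> real" where
  "h0 \<beta> r = Fb \<beta> (sigma0 \<beta> r) r"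

definition sublevel :: "real \<Rightarrow> real \<Rightarrow> (real \<times> real) set" where
  "sublevel \<beta> r = {x \<in> Xi. Fb \<beta> x r < h0 \<beta> r}"

end

theory Submission
  imports Defs "HOL-Real_Asymp.Real_Asymp"
begin

text \<open>Write F in barycentric coordinates (x0, x1, x2) and split the simplex into the three open
  regions where one coordinate is the strict maximum. Their common boundary consists of points
  where the two largest coordinates tie, and there F > h0 except at the saddle sigma0: on the
  diagonal x1 = x2 the one-dimensional energy is minimal at qb, and on x0 = x1 >= x2 it exceeds
  the field-free diagonal minimum, which lies above h0. Hence every component of {F < h0} lies in
  one region, and closures of components in different regions meet at most in sigma0, which is not
  in the closure of region 0.

  Minimizing F over the compact closure of a component yields a local minimizer of F on the
  simplex inside the component. Such a minimizer is interior with equal potentials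
  G(x_k) + f_k, and the uniqueness of the roots defining y2 and pb identifies it as mvec1 in
  region 2 and, for small r, as mvec0 in region 0; mvec2 is the mirror image of mvec1. Finally the
  segment from sigma0 in direction (-1, 1) stays below h0, so sigma0 lies in the closure of the
  component of mvec1, and for small r a fixed point of region 0 stays in the sublevel set.\<close>

section \<open>The energy in barycentric coordinates\<close>

text \<open>An arbitrary linear field (f0, f1, f2) makes permutations of the coordinates symmetries.\<close>

definition Fbar :: "real \<Rightarrow> real \<Rightarrow> real \<Rightarrow> real \<Rightarrow> real \<Rightarrow> real \<Rightarrow> real \<Rightarrow> real" where
  "Fbar \<beta> f0 f1 f2 x0 x1 x2 = - (1/2) * (x0\<^sup>2 + x1\<^sup>2 + x2\<^sup>2 - x0*x1 - x0*x2 - x1*x2)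
     + (1/\<beta>) * (ent x0 + ent x1 + ent x2) + f0*x0 + f1*x1 + f2*x2"

lemma vv_0: "vv 0 = (1, 0)"
  by (simp add: vv_def)

lemma vv_1: "vv 1 = (-1/2, sqrt 3 / 2)"
  by (simp add: vv_def cos_120 sin_120)

lemma vv_2: "vv 2 = (-1/2, - sqrt 3 / 2)"
proof -
  have e: "4 * pi / 3 = pi + pi/3" by simp
  have "cos (4 * pi / 3) = -1/2" "sin (4*pi/3) = - sqrt 3 / 2"
    unfolding e by (simp only: cos_add sin_add cos_pi sin_pi cos_60 sin_60; simp)+
  then show ?thesis unfolding vv_def by simp
qed

lemma norm_vv_combination_sq:
  "(norm (a *\<^sub>R vv 0 + b *\<^sub>R vv 1 + c *\<^sub>R vv 2))\<^sup>2 = a\<^sup>2 + b\<^sup>2 + c\<^sup>2 - a*b - a*c - b*c"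
proof -
  have v: "a *\<^sub>R vv 0 + b *\<^sub>R vv 1 + c *\<^sub>R vv 2 = (a - b/2 - c/2, (b - c) * sqrt 3 / 2)"
    unfolding vv_0 vv_1 vv_2 by (simp add: algebra_simps)
  have n: "(norm (u, w))\<^sup>2 = u\<^sup>2 + w\<^sup>2" for u w :: real
    by (simp add: norm_Pair)
  have "sqrt 3 * sqrt 3 = (3::real)" by simp
  then show ?thesis
    unfolding v n by (simp add: power2_eq_square field_simps)
qed

lemma Fb_eq_Fbar: "Fb \<beta> x r = Fbar \<beta> r (-r/2) (-r/2) (1 - fst x - snd x) (fst x) (snd x)"
  unfolding Fb_def Fbar_def Let_def norm_vv_combination_sq by (simp add: algebra_simps)

lemma Fbar_swap01: "Fbar \<beta> f0 f1 f2 x0 x1 x2 = Fbar \<beta> f1 f0 f2 x1 x0 x2"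
  by (simp add: Fbar_def algebra_simps)

lemma Fbar_swap12: "Fbar \<beta> f0 f1 f2 x0 x1 x2 = Fbar \<beta> f0 f2 f1 x0 x2 x1"
  by (simp add: Fbar_def algebra_simps)

lemma Fbar_swap02: "Fbar \<beta> f0 f1 f2 x0 x1 x2 = Fbar \<beta> f2 f1 f0 x2 x1 x0"
  by (simp add: Fbar_def algebra_simps)

lemma DERIV_ent: assumes "t > 0" shows "(ent has_real_derivative (ln (3*t) + 1)) (at t)"
proof -
  have "((\<lambda>x. x * ln (3*x)) has_real_derivative (ln (3*t) + 1)) (at t)"
    using assms by (auto intro!: derivative_eq_intros simp: field_simps)
  then show ?thesis
    by (rule has_field_derivative_transform_within_open[where S="{0<..}"])
       (use assms in \<open>auto simp: ent_def\<close>)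
qed

lemma continuous_on_ent: "continuous_on {0..} ent"
proof -
  have "continuous (at x within {0..}) ent" if "x \<ge> 0" for x
  proof (cases "x = 0")
    case True
    have "((\<lambda>x. x * ln (3*x)) \<longlongrightarrow> 0) (at_right (0::real))" by real_asymp
    then have "(ent \<longlongrightarrow> 0) (at_right (0::real))"
      by (rule tendsto_cong[THEN iffD1, rotated])
         (auto simp: ent_def eventually_at_right intro!: exI[of _ 1])
    then show ?thesis using True
      by (simp add: continuous_within at_within_Ici_at_right ent_def)
  next
    case False
    then have "isCont ent x" using DERIV_ent[of x] that DERIV_isCont by force
    then show ?thesis using continuous_at_imp_continuous_at_within by blast
  qed
  then show ?thesis by (simp add: continuous_on_eq_continuous_within)
qed

lemma continuous_on_Fbar:
  assumes "continuous_on S a" "continuous_on S b" "continuous_on S c"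
    and "\<And>s. s \<in> S \<Longrightarrow> a s \<ge> 0" "\<And>s. s \<in> S \<Longrightarrow> b s \<ge> 0" "\<And>s. s \<in> S \<Longrightarrow> c s \<ge> 0"
  shows "continuous_on S (\<lambda>s. Fbar \<beta> f0 f1 f2 (a s) (b s) (c s))"
proof -
  have ent: "continuous_on S (\<lambda>s. ent (u s))" if "continuous_on S u" "\<And>s. s \<in> S \<Longrightarrow> u s \<ge> 0" for u
    using continuous_on_compose2[OF continuous_on_ent that(1)] that(2) by auto
  show ?thesis
    unfolding Fbar_def using assms by (intro continuous_intros ent) auto
qed

lemma continuous_on_Fb: "continuous_on Xi (\<lambda>p. Fb \<beta> p r)"
  unfolding Fb_eq_Fbar by (intro continuous_on_Fbar continuous_intros) (auto simp: Xi_def)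

lemma DERIV_ent_compose:
  "(f has_real_derivative f') (at x) \<Longrightarrow> f x > 0 \<Longrightarrow>
   ((\<lambda>x. ent (f x)) has_real_derivative (ln (3 * f x) + 1) * f') (at x)"
  using DERIV_chain2[OF DERIV_ent] by blast

text \<open>GG x_k + f_k is the partial derivative of Fbar in x_k, up to a term common to all k.\<close>

lemma DERIV_Fbar_transfer:
  assumes "a + d > 0" "b - d > 0" "\<beta> \<noteq> 0"
  shows "((\<lambda>\<delta>. Fbar \<beta> f0 f1 f2 (a+\<delta>) (b-\<delta>) c) has_real_derivative
           (GG \<beta> (a+d) + f0 - GG \<beta> (b-d) - f1)) (at d)"
proof -
  have "((\<lambda>\<delta>. Fbar \<beta> f0 f1 f2 (a+\<delta>) (b-\<delta>) c) has_real_derivative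
     (- (1/2) * (2*(a+d) - 2*(b-d) - ((b-d) - (a+d)) - c + c)
      + (1/\<beta>) * ((ln (3*(a+d)) + 1) - (ln (3*(b-d)) + 1)) + f0 - f1)) (at d)"
    unfolding Fbar_def using assms
    by (auto intro!: derivative_eq_intros DERIV_ent_compose simp: algebra_simps power2_eq_square)
       (simp add: field_simps)
  moreover have "- (1/2) * (2*(a+d) - 2*(b-d) - ((b-d) - (a+d)) - c + c)
      + (1/\<beta>) * ((ln (3*(a+d)) + 1) - (ln (3*(b-d)) + 1)) + f0 - f1
      = GG \<beta> (a+d) + f0 - GG \<beta> (b-d) - f1"
  proof -
    have "ln (3*(a+d)) = ln 3 + ln (a+d)" "ln (3*(b-d)) = ln 3 + ln (b-d)"
      using assms ln_mult[of 3 "a+d"] ln_mult[of 3 "b-d"] by simp_all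
    then show ?thesis by (simp add: GG_def algebra_simps) (simp add: field_simps)
  qed
  ultimately show ?thesis by (rule DERIV_cong)
qed

lemma continuous_on_Fbar_transfer:
  "d \<ge> 0 \<Longrightarrow> x1 \<ge> d \<Longrightarrow> x0 \<ge> 0 \<Longrightarrow> x2 \<ge> 0 \<Longrightarrow>
   continuous_on {0..d} (\<lambda>\<delta>. Fbar \<beta> f0 f1 f2 (x0+\<delta>) (x1-\<delta>) x2)"
  by (intro continuous_on_Fbar continuous_intros) auto

section \<open>The diagonal energy and the function ff\<close>

definition Fdiag :: "real \<Rightarrow> real \<Rightarrow> real \<Rightarrow> real" where
  "Fdiag \<beta> r t = Fbar \<beta> r (-r/2) (-r/2) (1-2*t) t t"

definition lnratio :: "real \<Rightarrow> real" where
  "lnratio t = ln ((1 - 2*t) / t)"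

text \<open>ff_num r t / (1 - r - 3t)^2 is, up to the factor 2/3, the derivative of ff r; its
  zeros are those of hh t - r.\<close>

definition ff_num :: "real \<Rightarrow> real \<Rightarrow> real" where
  "ff_num r t = - (1 - r - 3*t) / (t * (1 - 2*t)) + 3 * lnratio t"

lemma Fdiag_field: "Fdiag \<beta> r t = Fdiag \<beta> 0 t + r * (1 - 3*t)"
  by (simp add: Fdiag_def Fbar_def algebra_simps)

lemma Fb_diag: "Fb \<beta> (t, t) r = Fdiag \<beta> r t"
  by (simp add: Fb_eq_Fbar Fdiag_def algebra_simps)

lemma Fb_field: "Fb \<beta> p r = Fb \<beta> p 0 + r * (3 * (1 - fst p - snd p) - 1) / 2"
  unfolding Fb_eq_Fbar Fbar_def by (simp add: field_simps)

lemma ff_eq: "ff r t = 2/3 * (lnratio t / (1 - r - 3*t))"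
  by (simp add: ff_def lnratio_def)

lemma lnratio_third: "lnratio (1/3) = 0"
  by (simp add: lnratio_def)

lemma lnratio_pos: "0 < t \<Longrightarrow> t < 1/3 \<Longrightarrow> lnratio t > 0"
  by (simp add: lnratio_def field_simps)

lemma DERIV_lnratio:
  assumes "0 < t" "t < 1/2"
  shows "(lnratio has_real_derivative (-1/(t*(1-2*t)))) (at t)"
proof -
  have "((\<lambda>t. ln (1-2*t) - ln t) has_real_derivative (-1/(t*(1-2*t)))) (at t)"
    using assms by (auto intro!: derivative_eq_intros simp: field_simps)
  then show ?thesis
    by (rule has_field_derivative_transform_within_open[where S="{0<..<1/2}"])
       (use assms in \<open>auto simp: lnratio_def ln_div\<close>)
qed

lemma DERIV_Fdiag:
  assumes "0 < t" "t < 1/2" "\<beta> \<noteq> 0"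
  shows "(Fdiag \<beta> r has_real_derivative (3 * (1 - r - 3*t) - (2/\<beta>) * lnratio t)) (at t)"
proof -
  have D: "(Fdiag \<beta> r has_real_derivative
     (- (1/2) * (2*(1-2*t)*(-2) + 2*t + 2*t - ((-2)*t + (1-2*t)) - ((-2)*t + (1-2*t)) - 2*t)
      + (1/\<beta>) * ((ln (3*(1-2*t)) + 1) * (-2) + (ln (3*t) + 1) + (ln (3*t) + 1)) + r*(-2) - r)) (at t)"
    unfolding Fdiag_def Fbar_def using assms
    by (auto intro!: derivative_eq_intros DERIV_ent_compose simp: algebra_simps power2_eq_square)
       (simp add: field_simps)
  have l: "ln (3*(1-2*t)) = ln 3 + ln (1-2*t)" "ln (3*t) = ln 3 + ln t"
    "lnratio t = ln (1-2*t) - ln t"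
    using assms ln_mult[of 3 "1-2*t"] ln_mult[of 3 t] by (simp_all add: lnratio_def ln_div)
  show ?thesis
    by (rule DERIV_cong[OF D]) (unfold l, simp add: field_simps, simp add: add_divide_distrib[symmetric])
qed

lemma DERIV_Fdiag_ff:
  assumes "0 < t" "t < 1/2" "\<beta> \<noteq> 0" "1 - r - 3*t \<noteq> 0"
  shows "(Fdiag \<beta> r has_real_derivative (3 * (1 - r - 3*t) * (1 - ff r t / \<beta>))) (at t)"
proof -
  have "D * (2/3 * (L / D)) = 2/3 * L" if "D \<noteq> 0" for D L :: real
    using that by simp
  then have e: "(1 - r - 3*t) * ff r t = 2/3 * lnratio t"
    using assms(4) unfolding ff_eq by blast
  have "3 * D * (1 - f / \<beta>) = 3 * D - 3 * (D * f) / \<beta>" for D f :: real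
    by (simp add: algebra_simps)
  then have "3 * (1 - r - 3*t) * (1 - ff r t / \<beta>) = 3 * (1 - r - 3*t) - 3 * ((1 - r - 3*t) * ff r t) / \<beta>" .
  also have "\<dots> = 3 * (1 - r - 3*t) - (2/\<beta>) * lnratio t"
    unfolding e by simp
  finally have "3 * (1 - r - 3*t) * (1 - ff r t / \<beta>) = 3 * (1 - r - 3*t) - (2/\<beta>) * lnratio t" .
  then show ?thesis using DERIV_cong[OF DERIV_Fdiag[OF assms(1-3)]] by metis
qed

lemma continuous_on_Fdiag: "continuous_on {0..1/2} (Fdiag \<beta> r)"
  unfolding Fdiag_def by (intro continuous_on_Fbar continuous_intros) auto

lemma DERIV_ff_num:
  assumes "0 < t" "t < 1/2"
  shows "(ff_num r has_real_derivative ((1 - r - 3*t) * (1 - 4*t) / (t*(1-2*t))\<^sup>2)) (at t)"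
proof -
  have p: "t * (1 - 2*t) > 0" using assms by simp
  have D: "(ff_num r has_real_derivative
     (- ((-3) * (t * (1 - 2*t)) - (1 - r - 3*t) * (1 - 4*t)) / (t * (1 - 2*t))\<^sup>2
      + 3 * (-1/(t*(1-2*t))))) (at t)"
    unfolding ff_num_def using assms p
    by (auto intro!: derivative_eq_intros DERIV_lnratio simp: power2_eq_square) (simp add: algebra_simps)
  have "- ((-3) * g - X) / g\<^sup>2 + 3 * (-1/g) = X / g\<^sup>2" if "g \<noteq> 0" for g X :: real
    using that by (simp add: field_simps power2_eq_square)
  moreover have "t * (1 - 2*t) \<noteq> 0" using assms by simp
  ultimately show ?thesis by (intro DERIV_cong[OF D])
qed

lemma continuous_on_ff_num: "continuous_on {0<..<1/2} (ff_num r)"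
  by (rule DERIV_continuous_on, rule has_field_derivative_at_within, rule DERIV_ff_num) auto

lemma DERIV_ff:
  assumes "0 < t" "t < 1/2" "1 - r - 3*t \<noteq> 0"
  shows "(ff r has_real_derivative (2/3 * ff_num r t / (1 - r - 3*t)\<^sup>2)) (at t)"
proof -
  have "((\<lambda>t. lnratio t / (1 - r - 3*t)) has_real_derivative
     ((-1/(t*(1-2*t))) * (1 - r - 3*t) - lnratio t * (-3)) / ((1 - r - 3*t) * (1 - r - 3*t))) (at t)"
    using assms by (auto intro!: derivative_eq_intros DERIV_lnratio)
  then have D: "(ff r has_real_derivative
     2/3 * (((-1/(t*(1-2*t))) * (1 - r - 3*t) - lnratio t * (-3)) / ((1 - r - 3*t) * (1 - r - 3*t)))) (at t)"
    unfolding ff_eq[abs_def] by (rule DERIV_cmult)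
  have "2/3 * ((-1/g * D - L*(-3))/(D*D)) = 2/3 * (- D / g + 3 * L) / D\<^sup>2" for g D L :: real
    by (simp add: power2_eq_square algebra_simps)
  then show ?thesis
    unfolding ff_num_def by (rule DERIV_cong[OF D])
qed

lemma continuous_on_ff:
  "(\<And>t. t \<in> S \<Longrightarrow> 0 < t \<and> t < 1/2 \<and> 1 - r - 3*t \<noteq> 0) \<Longrightarrow> continuous_on S (ff r)"
  by (rule DERIV_continuous_on, rule has_field_derivative_at_within, rule DERIV_ff) auto

lemma exp_lower_Taylor_cubic:
  assumes "(t::real) \<ge> 0" shows "1 + t + t\<^sup>2/2 + t^3/6 \<le> exp t"
proof -
  have "(\<lambda>x. exp x - (1 + x + x\<^sup>2/2 + x^3/6)) 0 \<le> (\<lambda>x. exp x - (1 + x + x\<^sup>2/2 + x^3/6)) t"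
  proof (rule DERIV_nonneg_imp_nondecreasing[OF assms])
    fix x :: real assume x: "0 \<le> x" "x \<le> t"
    have "((\<lambda>x. exp x - (1 + x + x\<^sup>2/2 + x^3/6)) has_real_derivative (exp x - (1 + x + x\<^sup>2/2))) (at x)"
      by (auto intro!: derivative_eq_intros simp: power2_eq_square power3_eq_cube field_simps)
    moreover have "exp x - (1 + x + x\<^sup>2/2) \<ge> 0" using exp_lower_Taylor_quadratic[OF x(1)] by simp
    ultimately show "\<exists>y. ((\<lambda>x. exp x - (1 + x + x\<^sup>2/2 + x^3/6)) has_real_derivative y) (at x) \<and> y \<ge> 0"
      by blast
  qed
  then show ?thesis by simp
qed

lemma ff_num_pos_upper:
  assumes r: "r > 0" and t: "1/3 \<le> t" "t < 1/2"
  shows "ff_num r t > 0"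
proof -
  have n3: "ff_num r (1/3) = 9 * r" by (simp add: ff_num_def lnratio_def)
  show ?thesis
  proof (cases "t = 1/3")
    case True
    show ?thesis unfolding True using n3 r by simp
  next
    case False
    then have t3: "1/3 < t" using t by simp
    have "ff_num r (1/3) < ff_num r t"
    proof (rule DERIV_pos_imp_increasing_open[OF t3])
      fix s assume s: "1/3 < s" "s < t"
      have "(1 - r - 3 * s) * (1 - 4 * s) / (s * (1-2 * s))\<^sup>2 > 0"
        using s t r by (intro divide_pos_pos mult_neg_neg) auto
      then show "\<exists>y. (ff_num r has_real_derivative y) (at s) \<and> 0 < y"
        using s t by (intro exI[of _ "(1 - r - 3 * s) * (1 - 4 * s) / (s * (1 - 2 * s))\<^sup>2"] conjI DERIV_ff_num) auto
    next
      show "continuous_on {1/3..t} (ff_num r)"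
        by (rule continuous_on_subset[OF continuous_on_ff_num]) (use t in auto)
    qed
    then show ?thesis using n3 r by simp
  qed
qed

lemma ff_strict_mono_upper:
  assumes r: "r > 0" and ab: "1/3 \<le> a" "a < b" "b < 1/2"
  shows "ff r a < ff r b"
proof (rule DERIV_pos_imp_increasing_open[OF ab(2)])
  fix s assume s: "a < s" "s < b"
  have "2/3 * ff_num r s / (1 - r - 3 * s)\<^sup>2 > 0"
    using ff_num_pos_upper[OF r, of s] s ab r by simp
  then show "\<exists>y. (ff r has_real_derivative y) (at s) \<and> 0 < y"
    using s ab r DERIV_ff[of s r] by auto
next
  show "continuous_on {a..b} (ff r)"
    by (rule continuous_on_ff) (use ab r in auto)
qed

lemma hh_eq_ff_num: "0 < t \<Longrightarrow> t < 1/2 \<Longrightarrow> hh t - r = - (t * (1 - 2*t)) * ff_num r t"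
  by (simp add: hh_def ff_num_def lnratio_def field_simps)

lemma ff_num_kk_pos: assumes "0 < r" "r < 1" shows "ff_num r (kk r) > 0"
proof -
  have "1 - r - 3 * kk r = 0" by (simp add: kk_def)
  then have "ff_num r (kk r) = 3 * lnratio (kk r)" unfolding ff_num_def by simp
  then show ?thesis using assms lnratio_pos[of "kk r"] by (simp add: kk_def)
qed

lemma ff_num_strict_mono_lower:
  assumes "0 < a" "a < b" "b \<le> 1/4" "b < kk r"
  shows "ff_num r a < ff_num r b"
proof (rule DERIV_pos_imp_increasing_open[OF assms(2)])
  fix s assume s: "a < s" "s < b"
  have "(1 - r - 3 * s) * (1 - 4 * s) / (s * (1-2 * s))\<^sup>2 > 0"
    using s assms by (intro divide_pos_pos mult_pos_pos) (auto simp: kk_def)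
  then show "\<exists>y. (ff_num r has_real_derivative y) (at s) \<and> 0 < y"
    using s assms DERIV_ff_num[of s r] by auto
next
  show "continuous_on {a..b} (ff_num r)"
    by (rule continuous_on_subset[OF continuous_on_ff_num]) (use assms in auto)
qed

lemma ff_num_strict_antimono_middle:
  assumes "1/4 \<le> a" "a < b" "b \<le> kk r" "0 < r"
  shows "ff_num r b < ff_num r a"
proof (rule DERIV_neg_imp_decreasing_open[OF assms(2)])
  fix s assume s: "a < s" "s < b"
  have "(1 - r - 3 * s) * (1 - 4 * s) / (s * (1-2 * s))\<^sup>2 < 0"
    using s assms by (intro divide_neg_pos mult_pos_neg) (auto simp: kk_def)
  then show "\<exists>y. (ff_num r has_real_derivative y) (at s) \<and> y < 0"
    using s assms DERIV_ff_num[of s r] by (auto simp: kk_def)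
next
  show "continuous_on {a..b} (ff_num r)"
    by (rule continuous_on_subset[OF continuous_on_ff_num]) (use assms in \<open>auto simp: kk_def\<close>)
qed

lemma ff_num_at_thousandth_neg:
  assumes "0 < r" "r \<le> 1/4"
  shows "ff_num r (1/1000) < 0"
proof -
  have "(1 - 2 * (1/1000)) / (1/1000) \<le> 1 + 27 + (27::real)\<^sup>2/2 + 27^3/6" by simp
  also have "\<dots> \<le> exp 27" by (rule exp_lower_Taylor_cubic) simp
  finally have "ln ((1 - 2 * (1/1000)) / (1/1000)) \<le> ln (exp (27::real))"
    by (subst ln_le_cancel_iff) auto
  then have "lnratio (1/1000) \<le> 27" by (simp add: lnratio_def)
  moreover have "(1/2) / ((1/1000) * (1 - 2 * (1/1000))) \<le>
      (1 - r - 3 * (1/1000)) / ((1/1000) * (1 - 2 * (1/1000::real)))"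
    using assms by (intro divide_right_mono) auto
  then have "(1 - r - 3 * (1/1000)) / ((1/1000) * (1 - 2 * (1/1000::real))) \<ge> 500" by simp
  ultimately show ?thesis unfolding ff_num_def minus_divide_left by linarith
qed

lemma ff_num_sign_m0:
  assumes r: "0 < r" "r \<le> 1/4"
  shows "0 < m0 r \<and> m0 r < kk r \<and> m0 r < 1/4
     \<and> (\<forall>t. 0 < t \<and> t < m0 r \<longrightarrow> ff_num r t < 0) \<and> (\<forall>t. m0 r < t \<and> t \<le> kk r \<longrightarrow> ff_num r t > 0)"
proof -
  have r1: "r < 1" using r by simp
  have kpos: "1/1000 < kk r" "kk r < 1/3" using r by (auto simp: kk_def)
  note kk_pos = ff_num_kk_pos[OF r(1) r1]
  have below_quarter: "t < 1/4" if "0 < t" "t < kk r" "ff_num r t = 0" for t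
    using ff_num_strict_antimono_middle[of t "kk r" r] kk_pos that r by force
  have "\<exists>t\<ge>1/1000. t \<le> kk r \<and> ff_num r t = 0"
    using ff_num_at_thousandth_neg[OF r] kk_pos kpos
    by (intro IVT) (auto intro!: DERIV_isCont[OF DERIV_ff_num])
  then obtain t0 where t0: "1/1000 \<le> t0" "t0 \<le> kk r" "ff_num r t0 = 0" by blast
  have t0k: "t0 < kk r" using t0 kk_pos by (cases "t0 = kk r") auto
  have t0q: "t0 < 1/4" using below_quarter t0 t0k by simp
  have m0: "m0 r = t0"
    unfolding m0_def
  proof (rule the_equality)
    show "0 < t0 \<and> t0 < kk r \<and> hh t0 = r" using t0 t0k hh_eq_ff_num[of t0 r] kpos by auto
  next
    fix s assume s: "0 < s \<and> s < kk r \<and> hh s = r"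
    then have "ff_num r s = 0" "s < 1/4" using hh_eq_ff_num[of s r] kpos below_quarter[of s] by auto
    then show "s = t0" using ff_num_strict_mono_lower[of s t0 r] ff_num_strict_mono_lower[of t0 s r] s t0 t0k t0q
      by (cases s t0 rule: linorder_cases) auto
  qed
  have "ff_num r t < 0" if "0 < t" "t < t0" for t
    using ff_num_strict_mono_lower[of t t0 r] that t0q t0k t0 by simp
  moreover have "ff_num r t > 0" if "t0 < t" "t \<le> kk r" for t
  proof (cases "t = kk r")
    case False
    then show ?thesis
      using ff_num_strict_mono_lower[of t0 t r] ff_num_strict_antimono_middle[of t "kk r" r] that t0 kk_pos r
      by (cases "t \<le> 1/4") auto
  qed (use kk_pos in simp)
  ultimately show ?thesis using m0 t0 t0k t0q by auto
qed

lemma ff_strict_antimono_below_m0: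
  assumes r: "0 < r" "r \<le> 1/4" and ab: "0 < a" "a < b" "b \<le> m0 r"
  shows "ff r b < ff r a"
proof -
  note M = ff_num_sign_m0[OF r]
  show ?thesis
  proof (rule DERIV_neg_imp_decreasing_open[OF ab(2)])
    fix s assume s: "a < s" "s < b"
    have D: "1 - r - 3 * s > 0" using s ab M by (simp add: kk_def)
    have "2/3 * ff_num r s / (1 - r - 3 * s)\<^sup>2 < 0" using M s ab D by (simp add: divide_neg_pos)
    then show "\<exists>y. (ff r has_real_derivative y) (at s) \<and> y < 0"
      using s ab M D DERIV_ff[of s r] by auto
  next
    show "continuous_on {a..b} (ff r)"
      by (rule continuous_on_ff) (use ab M in \<open>auto simp: kk_def\<close>)
  qed
qed

lemma ff_strict_mono_above_m0:
  assumes r: "0 < r" "r \<le> 1/4" and ab: "m0 r \<le> a" "a < b" "b < kk r"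
  shows "ff r a < ff r b"
proof -
  note M = ff_num_sign_m0[OF r]
  show ?thesis
  proof (rule DERIV_pos_imp_increasing_open[OF ab(2)])
    fix s assume s: "a < s" "s < b"
    have D: "1 - r - 3 * s > 0" using s ab M by (simp add: kk_def)
    have "2/3 * ff_num r s / (1 - r - 3 * s)\<^sup>2 > 0" using M s ab D by simp
    then show "\<exists>y. (ff r has_real_derivative y) (at s) \<and> 0 < y"
      using s ab M D r DERIV_ff[of s r] by (auto simp: kk_def)
  next
    show "continuous_on {a..b} (ff r)"
      by (rule continuous_on_ff) (use ab M r in \<open>auto simp: kk_def\<close>)
  qed
qed

section \<open>Pairs of solutions of GG x = y\<close>

text \<open>If G(x) = G(z) with x < z and t = 3 beta (z - x) / 2, then z = x e^t, so that
  x = rho t / (3 beta / 2): this parametrizes the pair (H y, K y) by t.\<close>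

definition rho :: "real \<Rightarrow> real" where
  "rho t = t / (exp t - 1)"

lemma three_rho_plus_le_three:
  assumes t: "0 < t" "t \<le> 3/2"
  shows "3 * rho t + t \<le> 3"
proof -
  have e1: "exp t - 1 > 0" using t by simp
  have "(3 - t) * (1 + t + t\<^sup>2/2 + t^3/6) = 3 + 2*t + t\<^sup>2 * (3 - t\<^sup>2) / 6"
    by (simp add: power2_eq_square power3_eq_cube field_simps)
  moreover have "t\<^sup>2 * (3 - t\<^sup>2) / 6 \<ge> 0"
  proof -
    have "t\<^sup>2 \<le> (3/2)\<^sup>2" using t by (intro power_mono) auto
    then show ?thesis by (intro divide_nonneg_pos mult_nonneg_nonneg) (auto simp: power2_eq_square)
  qed
  moreover have "(3 - t) * exp t \<ge> (3 - t) * (1 + t + t\<^sup>2/2 + t^3/6)"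
    using exp_lower_Taylor_cubic[of t] t by (intro mult_left_mono) auto
  ultimately have "(3 - t) * exp t \<ge> 3 + 2*t" by linarith
  then have "3 * t \<le> (3 - t) * (exp t - 1)" by (simp add: algebra_simps)
  then have "3 * t / (exp t - 1) \<le> 3 - t" using e1 by (simp add: field_simps)
  then show ?thesis by (simp add: rho_def)
qed

lemma plus_three_rho_strict_mono:
  assumes ab: "3/2 \<le> a" "a < b"
  shows "a + 3 * rho a < b + 3 * rho b"
proof -
  define e0 where "e0 = exp (3/2::real)"
  have "e0 \<ge> 1 + 3/2 + (3/2)\<^sup>2/2 + (3/2)^3/6" unfolding e0_def by (rule exp_lower_Taylor_cubic) simp
  then have e0: "e0 \<ge> 67/16" by (simp add: power2_eq_square power3_eq_cube)
  have key: "exp x + 1 - 2 / exp x - 3 * x > 0" if x: "x \<ge> 3/2" for x :: real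
  proof -
    have "exp x = e0 * exp (x - 3/2)" unfolding e0_def by (simp add: exp_diff)
    also have "\<dots> \<ge> e0 * (1 + (x - 3/2))"
      using e0 exp_ge_add_one_self[of "x - 3/2"] by (intro mult_left_mono) auto
    finally have ex: "exp x \<ge> e0 * (x - 1/2)" by (simp add: algebra_simps)
    have "e0 * (x - 1/2) - 3 * x = (e0 - 3) * (x - 3/2) + e0 - 9/2" by (simp add: field_simps)
    moreover have "(e0 - 3) * (x - 3/2) \<ge> 0" using e0 x by simp
    ultimately have A: "exp x - 3 * x \<ge> e0 - 9/2" using ex by linarith
    have "2 / exp x \<le> 2 / e0" using ex e0 x
      by (intro divide_left_mono) (auto simp: e0_def)
    also have "2 / e0 \<le> 2 / (67/16)" using e0 by (intro divide_left_mono) auto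
    finally have B: "2 / exp x \<le> 32/67" by simp
    show ?thesis using A B e0 by linarith
  qed
  show ?thesis
  proof (rule DERIV_pos_imp_increasing_open[OF ab(2)])
    fix x assume x: "a < x" "x < b"
    have e1: "exp x - 1 > 0" using x ab by simp
    have D: "((\<lambda>t. t + 3 * rho t) has_real_derivative
        (1 + 3 * ((exp x - 1) - x * exp x) / (exp x - 1)\<^sup>2)) (at x)"
      unfolding rho_def using e1
      by (auto intro!: derivative_eq_intros simp: power2_eq_square field_simps)
    have "(exp x - 1)\<^sup>2 + 3 * ((exp x - 1) - x * exp x) = exp x * (exp x + 1 - 2 / exp x - 3 * x)"
      by (simp add: power2_eq_square field_simps)
    also have "\<dots> > 0" using key x ab by simp
    finally have "1 + 3 * ((exp x - 1) - x * exp x) / (exp x - 1)\<^sup>2 > 0"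
      using e1 by (simp add: field_simps)
    then show "\<exists>y. ((\<lambda>t. t + 3 * rho t) has_real_derivative y) (at x) \<and> 0 < y" using D by blast
  next
    have "\<forall>x\<in>{a..b}. isCont (\<lambda>t. t + 3 * rho t) x"
      using ab unfolding rho_def by (auto intro!: continuous_intros)
    then show "continuous_on {a..b} (\<lambda>t. t + 3 * rho t)" by (rule continuous_at_imp_continuous_on)
  qed
qed

section \<open>Components of the sublevel set\<close>

lemma compact_Xi: "compact Xi"
proof -
  have "Xi = {p. 0 \<le> fst p} \<inter> {p. 0 \<le> snd p} \<inter> {p. fst p + snd p \<le> 1}"
    by (auto simp: Xi_def)
  moreover have "closed \<dots>"
    by (intro closed_Int closed_Collect_le continuous_intros)
  moreover have "Xi \<subseteq> cball 0 2"
  proof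
    fix p assume "p \<in> Xi"
    then obtain a b where p: "p = (a,b)" "0 \<le> a" "0 \<le> b" "a + b \<le> 1" by (auto simp: Xi_def)
    have "norm p \<le> norm a + norm b" unfolding p(1) by (rule norm_Pair_le)
    also have "\<dots> \<le> 2" using p by simp
    finally show "p \<in> cball 0 2" by simp
  qed
  ultimately show ?thesis
    by (metis bounded_cball bounded_subset compact_eq_bounded_closed)
qed

lemma convex_Xi: "convex Xi"
proof (rule convexI)
  fix x y :: "real \<times> real" and u v :: real
  assume "x \<in> Xi" "y \<in> Xi" and uv: "0 \<le> u" "0 \<le> v" "u + v = 1"
  then obtain a b c d where x: "x = (a,b)" "0 \<le> a" "0 \<le> b" "a + b \<le> 1"
    and y: "y = (c,d)" "0 \<le> c" "0 \<le> d" "c + d \<le> 1" by (auto simp: Xi_def)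
  have "u * a + v * c + (u * b + v * d) = u * (a+b) + v * (c+d)" by (simp add: algebra_simps)
  also have "\<dots> \<le> u * 1 + v * 1" using x y uv by (intro add_mono mult_left_mono) auto
  finally show "u *\<^sub>R x + v *\<^sub>R y \<in> Xi" using x y uv by (simp add: Xi_def)
qed

text \<open>Take a minimizer of F on the compact closure of a component C; it lies in the (relatively
  open) sublevel set, and a convex neighbourhood of it is connected and meets C, hence lies in C.\<close>

lemma connected_component_sublevel_contains_local_min:
  fixes F :: "'a::real_normed_vector \<Rightarrow> real"
  assumes X: "compact X" "convex X" and F: "continuous_on X F" and Q: "Q \<in> X" "F Q < h"
  shows "\<exists>P \<in> connected_component_set {x\<in>X. F x < h} Q. \<exists>\<epsilon>>0. \<forall>y\<in>X. dist y P < \<epsilon> \<longrightarrow> F P \<le> F y"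
proof -
  define S where "S = {x\<in>X. F x < h}"
  define C where "C = connected_component_set S Q"
  have CS: "C \<subseteq> S" unfolding C_def by (rule connected_component_subset)
  have QC: "Q \<in> C" using Q unfolding C_def S_def by simp
  have clX: "closure C \<subseteq> X"
    using CS X(1) by (intro closure_minimal compact_imp_closed) (auto simp: S_def)
  have "compact (closure C)"
    using compact_Int_closed[OF X(1) closed_closure[of C]] clX by (simp add: Int_absorb1)
  then obtain P where P: "P \<in> closure C" "\<forall>y\<in>closure C. F P \<le> F y"
    using continuous_attains_inf[OF _ _ continuous_on_subset[OF F clX]] QC closure_subset by blast
  have "F P \<le> F Q" using P(2) QC closure_subset by blast
  then have PS: "P \<in> S" using P(1) clX Q by (auto simp: S_def)
  have "openin (top_of_set X) (X \<inter> F -` {..<h})"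
    by (rule continuous_openin_preimage_gen[OF F]) simp
  moreover have "X \<inter> F -` {..<h} = S" by (auto simp: S_def)
  ultimately have "openin (top_of_set X) S" by simp
  then obtain \<epsilon> where e: "\<epsilon> > 0" "ball P \<epsilon> \<inter> X \<subseteq> S"
    using PS unfolding openin_contains_ball by blast
  define B where "B = ball P \<epsilon> \<inter> X"
  obtain c where c: "c \<in> C" "dist c P < \<epsilon>" using P(1) e(1) unfolding closure_approachable by blast
  have "c \<in> B" using c CS by (auto simp: B_def S_def dist_commute)
  moreover have "connected B" unfolding B_def by (intro convex_connected convex_Int convex_ball X(2))
  ultimately have "connected (C \<union> B)" using c(1) by (intro connected_Un) (auto simp: C_def)
  moreover have "C \<union> B \<subseteq> S" using CS e(2) B_def by auto
  ultimately have "C \<union> B \<subseteq> C" using QC unfolding C_def by (intro connected_component_maximal) auto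
  then have BC: "B \<subseteq> C" by simp
  have "P \<in> B" using e(1) PS by (simp add: B_def S_def)
  then have "P \<in> C" using BC by blast
  moreover have "\<forall>y\<in>X. dist y P < \<epsilon> \<longrightarrow> F P \<le> F y"
  proof (intro ballI impI)
    fix y assume "y \<in> X" "dist y P < \<epsilon>"
    then have "y \<in> C" using BC by (auto simp: B_def dist_commute)
    then show "F P \<le> F y" using P(2) closure_subset by blast
  qed
  ultimately show ?thesis using e(1) unfolding C_def S_def by blast
qed

lemma component_eq_connected_component_set:
  "C \<in> components S \<Longrightarrow> x \<in> C \<Longrightarrow> C = connected_component_set S x"
  by (metis components_iff connected_component_eq)

lemma connected_subset_disjoint_open_Un:
  assumes "connected W" "W \<subseteq> A \<union> B" "open A" "open B" "A \<inter> B = {}" "W \<inter> A \<noteq> {}"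
  shows "W \<subseteq> A"
  using connectedD[OF assms(1,3,4)] assms(2,5,6) by auto

definition region0 :: "(real \<times> real) set" where
  "region0 = {p. 1 - fst p - snd p > fst p \<and> 1 - fst p - snd p > snd p}"

definition region1 :: "(real \<times> real) set" where
  "region1 = {p. fst p > snd p \<and> fst p > 1 - fst p - snd p}"

definition region2 :: "(real \<times> real) set" where
  "region2 = {p. snd p > fst p \<and> snd p > 1 - fst p - snd p}"

definition regions :: "(real \<times> real) set set" where
  "regions = {region0, region1, region2}"

lemma open_regions: assumes "A \<in> regions" shows "open A"
proof -
  have "open region0" "open region1" "open region2"
    unfolding region0_def region1_def region2_def
    by (intro open_Collect_conj open_Collect_less continuous_intros)+
  then show ?thesis using assms by (auto simp: regions_def)
qed

lemma regions_disjoint: "A \<in> regions \<Longrightarrow> B \<in> regions \<Longrightarrow> A \<noteq> B \<Longrightarrow> A \<inter> B = {}"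
  unfolding regions_def region0_def region1_def region2_def by auto

lemma not_in_Union_regions:
  "p \<notin> \<Union>regions \<longleftrightarrow>
     (1 - fst p - snd p = fst p \<and> snd p \<le> fst p) \<or> (1 - fst p - snd p = snd p \<and> fst p \<le> snd p) \<or>
     (fst p = snd p \<and> 1 - fst p - snd p \<le> fst p)"
  unfolding regions_def region0_def region1_def region2_def by auto

lemma closure_region0_subset: "closure region0 \<subseteq> {p. fst p \<le> 1 - fst p - snd p}"
  by (rule closure_minimal) (auto simp: region0_def intro!: closed_Collect_le continuous_intros)

lemma closure_component_sublevel_subset:
  assumes "W \<subseteq> sublevel \<beta> r"
  shows "closure W \<subseteq> {x \<in> Xi. Fb \<beta> x r \<le> h0 \<beta> r}"
proof (rule closure_minimal)
  show "W \<subseteq> {x \<in> Xi. Fb \<beta> x r \<le> h0 \<beta> r}" using assms by (auto simp: sublevel_def)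
  have "closed (Xi \<inter> (\<lambda>x. Fb \<beta> x r) -` {..h0 \<beta> r})"
    by (rule continuous_closed_preimage[OF continuous_on_Fb compact_imp_closed[OF compact_Xi]]) simp
  then show "closed {x \<in> Xi. Fb \<beta> x r \<le> h0 \<beta> r}" by (simp add: Int_def vimage_def)
qed

definition swap12 :: "real \<times> real \<Rightarrow> real \<times> real" where
  "swap12 p = (snd p, fst p)"

lemma Fb_swap12: "Fb \<beta> (swap12 p) r = Fb \<beta> p r"
  unfolding Fb_eq_Fbar swap12_def fst_conv snd_conv by (subst Fbar_swap12) (simp add: algebra_simps)

lemma swap12_sublevel: "x \<in> sublevel \<beta> r \<Longrightarrow> swap12 x \<in> sublevel \<beta> r"
  by (auto simp: sublevel_def Xi_def swap12_def Fb_swap12[unfolded swap12_def])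

section \<open>The potential GG and its inverses\<close>

locale beta_gt_two =
  fixes \<beta> :: real
  assumes beta: "\<beta> > 2"
begin

lemma ll_pos: "ll \<beta> > 0"
  using beta by (simp add: ll_def)

lemma ll_less_third: "ll \<beta> < 1/3"
  using beta by (simp add: ll_def field_simps)

lemma GG_alt: "GG \<beta> x = ln x / \<beta> - 3/2 * x"
  by (simp add: GG_def)

lemma GG_diff: "GG \<beta> y - GG \<beta> x = (ln y - ln x) / \<beta> - 3/2 * (y - x)"
  by (simp add: GG_def diff_divide_distrib algebra_simps)

lemma GG_strict_mono: assumes "0 < x" "x < y" "y \<le> ll \<beta>" shows "GG \<beta> x < GG \<beta> y"
proof -
  have "ln (x/y) < x/y - 1"
    using assms ln_le_minus_one[of "x/y"] ln_eq_minus_one[of "x/y"] by force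
  then have "ln y - ln x > (y - x) / y" using assms by (simp add: ln_div field_simps)
  moreover have "(y - x) / y \<ge> \<beta> * (3/2) * (y - x)"
  proof -
    have "\<beta> * y \<le> 2/3" using assms(3) beta by (simp add: ll_def field_simps)
    then have "(\<beta> * y * 3) * (y - x) \<le> 2 * (y - x)" using assms by (intro mult_right_mono) auto
    then show ?thesis using assms by (simp add: field_simps)
  qed
  ultimately have "ln y - ln x > \<beta> * (3/2) * (y - x)" by linarith
  then have "(ln y - ln x) / \<beta> > (3/2) * (y - x)" using beta by (simp add: field_simps)
  then show ?thesis using GG_diff[of y x] by linarith
qed

lemma GG_strict_antimono: assumes "ll \<beta> \<le> x" "x < y" shows "GG \<beta> y < GG \<beta> x"
proof -
  have x0: "x > 0" using assms ll_pos by simp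
  have "ln (y/x) < y/x - 1"
    using assms x0 ln_le_minus_one[of "y/x"] ln_eq_minus_one[of "y/x"] by force
  then have "ln y - ln x < (y - x) / x" using assms x0 by (simp add: ln_div field_simps)
  moreover have "(y - x) / x \<le> \<beta> * (3/2) * (y - x)"
  proof -
    have "\<beta> * x \<ge> 2/3" using assms(1) beta by (simp add: ll_def field_simps)
    then have "(\<beta> * x * 3) * (y - x) \<ge> 2 * (y - x)" using assms by (intro mult_right_mono) auto
    then show ?thesis using x0 by (simp add: field_simps)
  qed
  ultimately have "ln y - ln x < \<beta> * (3/2) * (y - x)" by linarith
  then have "(ln y - ln x) / \<beta> < (3/2) * (y - x)" using beta by (simp add: field_simps)
  then show ?thesis using GG_diff[of y x] by linarith
qed

lemma GG_le_gg: "x > 0 \<Longrightarrow> GG \<beta> x \<le> gg \<beta>"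
  using GG_strict_mono[of x "ll \<beta>"] GG_strict_antimono[of "ll \<beta>" x] unfolding gg_def
  by (cases x "ll \<beta>" rule: linorder_cases) auto

lemma HH_eq: assumes "0 < x" "x \<le> ll \<beta>" "GG \<beta> x = y" shows "HH \<beta> y = x"
  unfolding HH_def
proof (rule the_equality)
  fix x' assume "0 < x' \<and> x' \<le> ll \<beta> \<and> GG \<beta> x' = y"
  then show "x' = x" using assms GG_strict_mono[of x x'] GG_strict_mono[of x' x]
    by (cases x x' rule: linorder_cases) auto
qed (use assms in auto)

lemma KK_eq: assumes "ll \<beta> \<le> x" "GG \<beta> x = y" shows "KK \<beta> y = x"
  unfolding KK_def
proof (rule the_equality)
  fix x' assume "ll \<beta> \<le> x' \<and> GG \<beta> x' = y"
  then show "x' = x" using assms GG_strict_antimono[of x x'] GG_strict_antimono[of x' x]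
    by (cases x x' rule: linorder_cases) auto
qed (use assms in auto)

lemma continuous_on_GG: "continuous_on {0<..} (GG \<beta>)"
  unfolding GG_def by (intro continuous_intros) auto

lemma HH_spec: assumes "y \<le> gg \<beta>" shows "0 < HH \<beta> y \<and> HH \<beta> y \<le> ll \<beta> \<and> GG \<beta> (HH \<beta> y) = y"
proof -
  define a where "a = min (ll \<beta> / 2) (exp (\<beta> * y))"
  have a0: "a > 0" "a \<le> ll \<beta>" using ll_pos by (auto simp: a_def)
  have "ln a \<le> \<beta> * y" using a0 unfolding a_def
    by (metis exp_gt_zero ln_exp ln_le_cancel_iff min.cobounded2)
  then have "ln a / \<beta> \<le> y" using beta by (simp add: field_simps)
  moreover have "GG \<beta> a \<le> ln a / \<beta>" using a0 by (simp add: GG_def)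
  ultimately have "GG \<beta> a \<le> y" by linarith
  then have "\<exists>x\<ge>a. x \<le> ll \<beta> \<and> GG \<beta> x = y"
    using assms a0 unfolding gg_def
    by (intro IVT) (auto intro!: continuous_on_interior[OF continuous_on_GG] simp: interior_open)
  then obtain x where x: "a \<le> x" "x \<le> ll \<beta>" "GG \<beta> x = y" by blast
  then show ?thesis using HH_eq[of x y] a0 by auto
qed

lemma KK_spec: assumes "y \<le> gg \<beta>" shows "ll \<beta> \<le> KK \<beta> y \<and> GG \<beta> (KK \<beta> y) = y"
proof -
  define a where "a = max (ll \<beta>) (\<bar>y\<bar> + 1)"
  have a0: "a > 0" "a \<ge> ll \<beta>" "a \<ge> \<bar>y\<bar> + 1" using ll_pos by (auto simp: a_def)
  have "ln a / \<beta> \<le> a / \<beta>"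
    using ln_le_minus_one[OF a0(1)] beta by (simp add: divide_right_mono)
  also have "a / \<beta> \<le> a / 2" using a0 beta by (intro divide_left_mono) auto
  finally have "ln a / \<beta> \<le> a/2" .
  moreover have "GG \<beta> a = ln a / \<beta> - 3/2 * a" by (simp add: GG_def)
  ultimately have "GG \<beta> a \<le> a/2 - 3/2 * a" by linarith
  then have "GG \<beta> a \<le> y" using a0 by linarith
  then have "\<exists>x\<ge>ll \<beta>. x \<le> a \<and> GG \<beta> x = y"
    using assms a0 ll_pos unfolding gg_def
    by (intro IVT2) (auto intro!: continuous_on_interior[OF continuous_on_GG] simp: interior_open)
  then obtain x where x: "ll \<beta> \<le> x" "GG \<beta> x = y" by blast
  then show ?thesis using KK_eq[of x y] by auto
qed

lemma HH_strict_mono: assumes "u < v" "v \<le> gg \<beta>" shows "HH \<beta> u < HH \<beta> v"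
  using HH_spec[of u] HH_spec[of v] GG_strict_mono[of "HH \<beta> v" "HH \<beta> u"] assms
  by (cases "HH \<beta> v" "HH \<beta> u" rule: linorder_cases) auto

lemma KK_strict_antimono: assumes "u < v" "v \<le> gg \<beta>" shows "KK \<beta> v < KK \<beta> u"
  using KK_spec[of u] KK_spec[of v] GG_strict_antimono[of "KK \<beta> u" "KK \<beta> v"] assms
  by (cases "KK \<beta> v" "KK \<beta> u" rule: linorder_cases) auto
end

section \<open>Local minimizers\<close>

definition Fbar_local_min :: "real \<Rightarrow> real \<Rightarrow> real \<Rightarrow> real \<Rightarrow> real \<Rightarrow> real \<Rightarrow> real \<Rightarrow> bool" where
  "Fbar_local_min \<beta> f0 f1 f2 x0 x1 x2 \<longleftrightarrow> (\<exists>\<epsilon>>0. \<forall>a b c. a + b + c = 0 \<and> \<bar>a\<bar> < \<epsilon> \<and> \<bar>b\<bar> < \<epsilon> \<and> \<bar>c\<bar> < \<epsilon>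
      \<and> x0 + a \<ge> 0 \<and> x1 + b \<ge> 0 \<and> x2 + c \<ge> 0 \<longrightarrow>
      Fbar \<beta> f0 f1 f2 x0 x1 x2 \<le> Fbar \<beta> f0 f1 f2 (x0+a) (x1+b) (x2+c))"

lemma Fbar_local_min_swap01:
  "Fbar_local_min \<beta> f0 f1 f2 x0 x1 x2 \<Longrightarrow> Fbar_local_min \<beta> f1 f0 f2 x1 x0 x2"
  unfolding Fbar_local_min_def
  apply (elim exE conjE, rule exI, rule conjI, assumption, intro allI impI)
  subgoal for \<epsilon> a b c
    by (erule allE[of _ b], erule allE[of _ a], erule allE[of _ c])
       (subst (1 2) Fbar_swap01, auto simp: algebra_simps)
  done

lemma Fbar_local_min_swap12:
  "Fbar_local_min \<beta> f0 f1 f2 x0 x1 x2 \<Longrightarrow> Fbar_local_min \<beta> f0 f2 f1 x0 x2 x1"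
  unfolding Fbar_local_min_def
  apply (elim exE conjE, rule exI, rule conjI, assumption, intro allI impI)
  subgoal for \<epsilon> a b c
    by (erule allE[of _ a], erule allE[of _ c], erule allE[of _ b])
       (subst (1 2) Fbar_swap12, auto simp: algebra_simps)
  done

lemma Fbar_local_min_swap02:
  "Fbar_local_min \<beta> f0 f1 f2 x0 x1 x2 \<Longrightarrow> Fbar_local_min \<beta> f2 f1 f0 x2 x1 x0"
  unfolding Fbar_local_min_def
  apply (elim exE conjE, rule exI, rule conjI, assumption, intro allI impI)
  subgoal for \<epsilon> a b c
    by (erule allE[of _ c], erule allE[of _ b], erule allE[of _ a])
       (subst (1 2) Fbar_swap02, auto simp: algebra_simps)
  done

lemma Fbar_local_min_transfer:
  assumes "Fbar_local_min \<beta> f0 f1 f2 x0 x1 x2" "x2 \<ge> 0"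
  obtains \<epsilon> where "\<epsilon> > 0" "\<And>\<delta>. \<bar>\<delta>\<bar> < \<epsilon> \<Longrightarrow> x0 + \<delta> \<ge> 0 \<Longrightarrow> x1 - \<delta> \<ge> 0 \<Longrightarrow>
      Fbar \<beta> f0 f1 f2 x0 x1 x2 \<le> Fbar \<beta> f0 f1 f2 (x0 + \<delta>) (x1 - \<delta>) x2"
proof -
  obtain \<epsilon> where "\<epsilon> > 0" and H: "\<forall>a b c. a + b + c = 0 \<and> \<bar>a\<bar> < \<epsilon> \<and> \<bar>b\<bar> < \<epsilon> \<and> \<bar>c\<bar> < \<epsilon>
      \<and> x0 + a \<ge> 0 \<and> x1 + b \<ge> 0 \<and> x2 + c \<ge> 0 \<longrightarrow>
      Fbar \<beta> f0 f1 f2 x0 x1 x2 \<le> Fbar \<beta> f0 f1 f2 (x0+a) (x1+b) (x2+c)"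
    using assms(1) unfolding Fbar_local_min_def by blast
  show thesis
  proof (rule that[OF \<open>\<epsilon> > 0\<close>])
    fix \<delta> :: real assume "\<bar>\<delta>\<bar> < \<epsilon>" "x0 + \<delta> \<ge> 0" "x1 - \<delta> \<ge> 0"
    then show "Fbar \<beta> f0 f1 f2 x0 x1 x2 \<le> Fbar \<beta> f0 f1 f2 (x0 + \<delta>) (x1 - \<delta>) x2"
      using H[rule_format, of \<delta> "-\<delta>" 0] \<open>\<epsilon> > 0\<close> assms(2) by simp
  qed
qed

context beta_gt_two
begin

text \<open>Near a face the entropy dominates: moving a little mass into an empty coordinate lowers
  Fbar, since GG tends to -infinity at 0.\<close>

lemma not_Fbar_local_min_face:
  assumes lm: "Fbar_local_min \<beta> f0 f1 f2 0 x1 x2" and x1: "x1 > 0" and x2: "x2 \<ge> 0"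
  shows False
proof -
  obtain \<epsilon> where e: "\<epsilon> > 0" and H: "\<And>\<delta>. \<bar>\<delta>\<bar> < \<epsilon> \<Longrightarrow> 0 + \<delta> \<ge> 0 \<Longrightarrow> x1 - \<delta> \<ge> 0 \<Longrightarrow>
      Fbar \<beta> f0 f1 f2 0 x1 x2 \<le> Fbar \<beta> f0 f1 f2 (0 + \<delta>) (x1 - \<delta>) x2"
    using Fbar_local_min_transfer[OF lm x2] by blast
  define M where "M = 3/2 * x1 + \<bar>f0\<bar> + \<bar>f1\<bar>"
  define d where "d = min (\<epsilon>/2) (min (x1/2) ((x1/2) * exp (- \<beta> * M)))"
  have d0: "d > 0" using e x1 by (simp add: d_def)
  have dle: "d \<le> x1/2" "d < \<epsilon>" "d \<le> (x1/2) * exp (- \<beta> * M)" using e d0 by (auto simp: d_def)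
  have neg: "GG \<beta> (0+s) + f0 - GG \<beta> (x1-s) - f1 < 0" if s: "0 < s" "s < d" for s
  proof -
    have "ln s < ln ((x1/2) * exp (- \<beta> * M))" using s dle by simp
    also have "\<dots> = ln (x1/2) - \<beta> * M" using x1 by (subst ln_mult) auto
    finally have ls: "(ln s - ln (x1/2)) / \<beta> < - M" using beta by (simp add: field_simps)
    have "ln (x1/2) / \<beta> \<le> ln (x1 - s) / \<beta>" using s dle x1 beta by (simp add: divide_right_mono)
    moreover have "A \<le> B \<Longrightarrow> A - 3/2 * x1 \<le> B - 3/2 * (x1 - s)" for A B
      using s by (simp add: field_simps)
    ultimately have "GG \<beta> (x1 - s) \<ge> ln (x1/2) / \<beta> - 3/2 * x1" unfolding GG_alt by blast
    moreover have "GG \<beta> s \<le> ln s / \<beta>" using s unfolding GG_alt by simp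
    ultimately have "GG \<beta> (0+s) + f0 - GG \<beta> (x1-s) - f1 \<le> (ln s - ln (x1/2)) / \<beta> + M"
      unfolding M_def by (simp add: diff_divide_distrib)
    with ls show ?thesis by linarith
  qed
  have "Fbar \<beta> f0 f1 f2 (0+0) (x1-0) x2 > Fbar \<beta> f0 f1 f2 (0+d) (x1-d) x2"
  proof (rule DERIV_neg_imp_decreasing_open[OF d0])
    fix s assume "0 < s" "s < d"
    then show "\<exists>y. ((\<lambda>\<delta>. Fbar \<beta> f0 f1 f2 (0+\<delta>) (x1-\<delta>) x2) has_real_derivative y) (at s) \<and> y < 0"
      using neg[of s] dle beta
      by (intro exI[of _ "GG \<beta> (0+s) + f0 - GG \<beta> (x1-s) - f1"] conjI DERIV_Fbar_transfer) auto
  qed (use dle x1 x2 d0 in \<open>intro continuous_on_Fbar_transfer, auto\<close>)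
  moreover have "Fbar \<beta> f0 f1 f2 0 x1 x2 \<le> Fbar \<beta> f0 f1 f2 (0+d) (x1-d) x2"
    using dle d0 by (intro H) auto
  ultimately show False by simp
qed

lemma Fbar_local_min_potentials_eq:
  assumes lm: "Fbar_local_min \<beta> f0 f1 f2 x0 x1 x2" and x0: "x0 > 0" and x1: "x1 > 0" and x2: "x2 \<ge> 0"
  shows "GG \<beta> x0 + f0 = GG \<beta> x1 + f1"
proof -
  obtain \<epsilon> where e: "\<epsilon> > 0" and H: "\<And>\<delta>. \<bar>\<delta>\<bar> < \<epsilon> \<Longrightarrow> x0 + \<delta> \<ge> 0 \<Longrightarrow> x1 - \<delta> \<ge> 0 \<Longrightarrow>
      Fbar \<beta> f0 f1 f2 x0 x1 x2 \<le> Fbar \<beta> f0 f1 f2 (x0 + \<delta>) (x1 - \<delta>) x2"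
    using Fbar_local_min_transfer[OF lm x2] by blast
  have D: "((\<lambda>\<delta>. Fbar \<beta> f0 f1 f2 (x0+\<delta>) (x1-\<delta>) x2) has_real_derivative
           (GG \<beta> (x0+0) + f0 - GG \<beta> (x1-0) - f1)) (at 0)"
    using x0 x1 beta by (intro DERIV_Fbar_transfer) auto
  have "GG \<beta> (x0+0) + f0 - GG \<beta> (x1-0) - f1 = 0"
  proof (rule DERIV_local_min[OF D])
    show "0 < min \<epsilon> (min x0 x1)" using e x0 x1 by simp
    show "\<forall>y. \<bar>0 - y\<bar> < min \<epsilon> (min x0 x1) \<longrightarrow>
        Fbar \<beta> f0 f1 f2 (x0 + 0) (x1 - 0) x2 \<le> Fbar \<beta> f0 f1 f2 (x0 + y) (x1 - y) x2"
    proof (intro allI impI)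
      fix y assume "\<bar>0 - y\<bar> < min \<epsilon> (min x0 x1)"
      then show "Fbar \<beta> f0 f1 f2 (x0 + 0) (x1 - 0) x2 \<le> Fbar \<beta> f0 f1 f2 (x0 + y) (x1 - y) x2"
        using H[of y] by auto
    qed
  qed
  then show ?thesis by simp
qed

lemma Fbar_local_min_interior_critical:
  assumes lm: "Fbar_local_min \<beta> f0 f1 f2 x0 x1 x2"
    and nn: "x0 \<ge> 0" "x1 \<ge> 0" "x2 \<ge> 0" and s: "x0 + x1 + x2 = 1"
  shows "x0 > 0 \<and> x1 > 0 \<and> x2 > 0 \<and> GG \<beta> x0 + f0 = GG \<beta> x1 + f1 \<and> GG \<beta> x0 + f0 = GG \<beta> x2 + f2"
proof -
  have p0: "x0 > 0"
  proof (rule ccontr)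
    assume "\<not> x0 > 0" then have z: "x0 = 0" using nn by simp
    then consider "x1 > 0" | "x2 > 0" using s nn by linarith
    then show False
      using not_Fbar_local_min_face[of f0 f1 f2 x1 x2] not_Fbar_local_min_face[of f0 f2 f1 x2 x1]
        lm Fbar_local_min_swap12[OF lm] z nn by cases auto
  qed
  have p1: "x1 > 0"
    using not_Fbar_local_min_face[of f1 f0 f2 x0 x2] Fbar_local_min_swap01[OF lm] nn p0
    by (cases "x1 = 0") auto
  have p2: "x2 > 0"
    using not_Fbar_local_min_face[of f2 f1 f0 x1 x0] Fbar_local_min_swap02[OF lm] nn p1
    by (cases "x2 = 0") auto
  show ?thesis
    using Fbar_local_min_potentials_eq[OF lm p0 p1] nn
      Fbar_local_min_potentials_eq[OF Fbar_local_min_swap12[OF lm] p0 p2] p0 p1 p2 by simp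
qed

text \<open>Since GG decreases beyond ll, moving mass between two such coordinates with equal potentials
  lowers Fbar.\<close>

lemma not_Fbar_local_min_two_above_ll:
  assumes lm: "Fbar_local_min \<beta> f0 f1 f2 x0 x1 x2" and x0: "x0 > ll \<beta>" and x1: "x1 > ll \<beta>"
    and x2: "x2 \<ge> 0" and cr: "GG \<beta> x0 + f0 = GG \<beta> x1 + f1"
  shows False
proof -
  obtain \<epsilon> where e: "\<epsilon> > 0" and H: "\<And>\<delta>. \<bar>\<delta>\<bar> < \<epsilon> \<Longrightarrow> x0 + \<delta> \<ge> 0 \<Longrightarrow> x1 - \<delta> \<ge> 0 \<Longrightarrow>
      Fbar \<beta> f0 f1 f2 x0 x1 x2 \<le> Fbar \<beta> f0 f1 f2 (x0 + \<delta>) (x1 - \<delta>) x2"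
    using Fbar_local_min_transfer[OF lm x2] by blast
  define d where "d = min (\<epsilon>/2) ((x1 - ll \<beta>)/2)"
  have "d \<le> (x1 - ll \<beta>)/2" "d \<le> \<epsilon>/2" unfolding d_def by linarith+
  then have d0: "d > 0" "d < \<epsilon>" "d < x1 - ll \<beta>" using e x1 by (auto simp: d_def)
  have "Fbar \<beta> f0 f1 f2 (x0+0) (x1-0) x2 > Fbar \<beta> f0 f1 f2 (x0+d) (x1-d) x2"
  proof (rule DERIV_neg_imp_decreasing_open[OF d0(1)])
    fix s assume s: "0 < s" "s < d"
    have "GG \<beta> (x0+s) < GG \<beta> x0" "GG \<beta> x1 < GG \<beta> (x1-s)"
      using GG_strict_antimono[of x0 "x0+s"] GG_strict_antimono[of "x1-s" x1] x0 s d0 by auto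
    then have "GG \<beta> (x0+s) + f0 - GG \<beta> (x1-s) - f1 < 0" using cr by linarith
    then show "\<exists>y. ((\<lambda>\<delta>. Fbar \<beta> f0 f1 f2 (x0+\<delta>) (x1-\<delta>) x2) has_real_derivative y) (at s) \<and> y < 0"
      using s d0 x0 x1 ll_pos beta
      by (intro exI[of _ "GG \<beta> (x0+s) + f0 - GG \<beta> (x1-s) - f1"] conjI DERIV_Fbar_transfer) auto
  qed (use d0 x0 x1 x2 ll_pos in \<open>intro continuous_on_Fbar_transfer, auto\<close>)
  moreover have "Fbar \<beta> f0 f1 f2 x0 x1 x2 \<le> Fbar \<beta> f0 f1 f2 (x0+d) (x1-d) x2"
    using d0 x0 x1 ll_pos by (intro H) auto
  ultimately show False by simp
qed

lemma Fbar_split_strict_less: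
  assumes x0: "x0 \<ge> 0" and c: "c > ll \<beta>" and u: "0 < u" "u < c - ll \<beta>"
  shows "Fbar \<beta> f0 f1 f1 x0 (c - u) (c + u) < Fbar \<beta> f0 f1 f1 x0 c c"
proof -
  have "Fbar \<beta> f1 f1 f0 (c+0) (c-0) x0 > Fbar \<beta> f1 f1 f0 (c+u) (c-u) x0"
  proof (rule DERIV_neg_imp_decreasing_open[OF u(1)])
    fix s assume s: "0 < s" "s < u"
    have "GG \<beta> (c+s) < GG \<beta> (c-s)" using GG_strict_antimono[of "c-s" "c+s"] s u by simp
    then show "\<exists>y. ((\<lambda>\<delta>. Fbar \<beta> f1 f1 f0 (c+\<delta>) (c-\<delta>) x0) has_real_derivative y) (at s) \<and> y < 0"
      using s u c ll_pos beta
      by (intro exI[of _ "GG \<beta> (c+s) + f1 - GG \<beta> (c-s) - f1"] conjI DERIV_Fbar_transfer) auto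
  qed (use u c x0 ll_pos in \<open>intro continuous_on_Fbar_transfer, auto\<close>)
  then show ?thesis by (subst (1 2) Fbar_swap02) (simp add: algebra_simps)
qed

lemma local_min_Fb_imp_Fbar_local_min:
  assumes P: "P \<in> Xi" and e: "\<epsilon> > 0" and H: "\<forall>y\<in>Xi. dist y P < \<epsilon> \<longrightarrow> Fb \<beta> P r \<le> Fb \<beta> y r"
  shows "Fbar_local_min \<beta> r (-r/2) (-r/2) (1 - fst P - snd P) (fst P) (snd P)"
  unfolding Fbar_local_min_def
proof (intro exI[of _ "\<epsilon>/2"] conjI allI impI)
  show "\<epsilon>/2 > 0" using e by simp
  fix a b c assume h: "a + b + c = 0 \<and> \<bar>a\<bar> < \<epsilon>/2 \<and> \<bar>b\<bar> < \<epsilon>/2 \<and> \<bar>c\<bar> < \<epsilon>/2 \<and>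
     1 - fst P - snd P + a \<ge> 0 \<and> fst P + b \<ge> 0 \<and> snd P + c \<ge> 0"
  define y where "y = (fst P + b, snd P + c)"
  have yX: "y \<in> Xi" using h unfolding y_def Xi_def by auto
  have "dist y P = norm (b, c)" unfolding y_def dist_norm by (cases P) simp
  also have "\<dots> \<le> norm b + norm c" by (rule norm_Pair_le)
  also have "\<dots> < \<epsilon>" using h by simp
  finally have "Fb \<beta> P r \<le> Fb \<beta> y r" using H yX by blast
  moreover have "1 - (fst P + b) - (snd P + c) = 1 - fst P - snd P + a" using h by simp
  ultimately show "Fbar \<beta> r (- r / 2) (- r / 2) (1 - fst P - snd P) (fst P) (snd P)
       \<le> Fbar \<beta> r (- r / 2) (- r / 2) (1 - fst P - snd P + a) (fst P + b) (snd P + c)"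
    unfolding Fb_eq_Fbar y_def fst_conv snd_conv by simp
qed
end

section \<open>The minimum of the diagonal energy on [1/3, 1/2]\<close>

text \<open>For r > 0 the energy h0 stays below the value of the field-free diagonal energy at tstar,
  while F exceeds that value on the boundary pieces x0 = x1 >= x2 and x0 = x2 >= x1.\<close>

definition tstar :: "real \<Rightarrow> real" where
  "tstar \<beta> = (SOME ts. 1/3 < ts \<and> ts \<le> 1/2 \<and> (\<forall>t\<in>{1/3..1/2}. Fdiag \<beta> 0 ts \<le> Fdiag \<beta> 0 t))"

context beta_gt_two
begin

lemma qb_root:
  assumes r: "r > 0"
  shows "1/3 < qb \<beta> r \<and> qb \<beta> r < 1/2 \<and> ff r (qb \<beta> r) = \<beta>"
proof -
  define E where "E = exp (3*\<beta>*(r+1/2)/2)"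
  have E1: "E > 1" using beta r by (simp add: E_def)
  define t1 where "t1 = E / (1 + 2*E)"
  have t1: "1/3 < t1" "t1 < 1/2" using E1 by (simp_all add: t1_def field_simps)
  have "(1 - 2*t1) / t1 = 1/E" using E1 by (simp add: t1_def field_simps)
  then have L: "lnratio t1 = - (3*\<beta>*(r+1/2)/2)" by (simp add: lnratio_def E_def ln_div)
  have D: "- (1 - r - 3*t1) > 0" "- (1 - r - 3*t1) \<le> r + 1/2" using t1 r by simp_all
  have "ff r t1 = 2/3 * ((3*\<beta>*(r+1/2)/2) / (- (1 - r - 3*t1)))"
    by (simp only: ff_eq L divide_minus_right minus_divide_left)
  also have "\<dots> \<ge> 2/3 * ((3*\<beta>*(r+1/2)/2) / (r + 1/2))"
    using D beta r by (intro mult_left_mono divide_left_mono mult_pos_pos) auto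
  also have "2/3 * ((3*\<beta>*(r+1/2)/2) / (r + 1/2)) = \<beta>" using r by (simp add: field_simps)
  finally have ft1: "\<beta> \<le> ff r t1" .
  have f3: "ff r (1/3) = 0" by (simp add: ff_eq lnratio_third)
  have "\<exists>t\<ge>1/3. t \<le> t1 \<and> ff r t = \<beta>"
    using f3 ft1 beta t1 r
    by (intro IVT) (auto intro!: DERIV_isCont[OF DERIV_ff])
  then obtain t where t: "1/3 \<le> t" "t \<le> t1" "ff r t = \<beta>" by blast
  have t3: "t \<noteq> 1/3"
  proof
    assume "t = 1/3"
    then have "ff r (1/3) = \<beta>" using t(3) by metis
    then show False using f3 beta by simp
  qed
  have "qb \<beta> r = t"
    unfolding qb_def
  proof (rule the_equality)
    fix s assume s: "1/3 < s \<and> s < 1/2 \<and> ff r s = \<beta>"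
    show "s = t"
      using ff_strict_mono_upper[OF r, of s t] ff_strict_mono_upper[OF r, of t s] s t t1
      by (cases s t rule: linorder_cases) auto
  qed (use t t3 t1 in auto)
  then show ?thesis using t t3 t1 by simp
qed

lemma h0_eq_Fdiag: "h0 \<beta> r = Fdiag \<beta> r (qb \<beta> r)"
  by (simp add: h0_def sigma0_def Fb_diag)

text \<open>On [1/3, 1/2] the derivative 3 (1 - r - 3t) (1 - ff r t / beta) of the diagonal energy
  changes sign only at qb, where ff crosses beta.\<close>

lemma Fdiag_strict_min_qb:
  assumes r: "r > 0" and t: "1/3 \<le> t" "t \<le> 1/2" "t \<noteq> qb \<beta> r"
  shows "Fdiag \<beta> r (qb \<beta> r) < Fdiag \<beta> r t"
proof -
  let ?q = "qb \<beta> r"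
  have q: "1/3 < ?q" "?q < 1/2" "ff r ?q = \<beta>" using qb_root[OF r] by auto
  have D: "1 - r - 3 * s < 0" if "1/3 < s" for s
    using that r by simp
  have deriv: "(Fdiag \<beta> r has_real_derivative (3 * (1 - r - 3 * s) * (1 - ff r s / \<beta>))) (at s)"
    if "1/3 < s" "s < 1/2" for s
    using that D[of s] beta by (intro DERIV_Fdiag_ff) auto
  have cont: "continuous_on {a..b} (Fdiag \<beta> r)" if "1/3 \<le> a" "b \<le> 1/2" for a b
    by (rule continuous_on_subset[OF continuous_on_Fdiag]) (use that in auto)
  consider "t < ?q" | "?q < t" using t by linarith
  then show ?thesis
  proof cases
    case 1
    show ?thesis
    proof (rule DERIV_neg_imp_decreasing_open[OF 1])
      fix s assume s: "t < s" "s < ?q"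
      have "ff r s < \<beta>" using ff_strict_mono_upper[OF r, of s ?q] s t q by simp
      then have "1 - ff r s / \<beta> > 0" using beta by simp
      moreover have "3 * (1 - r - 3 * s) < 0" using D[of s] s t by simp
      ultimately have "3 * (1 - r - 3 * s) * (1 - ff r s / \<beta>) < 0"
        by (simp add: mult_neg_pos)
      then show "\<exists>y. (Fdiag \<beta> r has_real_derivative y) (at s) \<and> y < 0"
        using deriv[of s] s t q by auto
    qed (use cont t q in auto)
  next
    case 2
    show ?thesis
    proof (rule DERIV_pos_imp_increasing_open[OF 2])
      fix s assume s: "?q < s" "s < t"
      have "ff r s > \<beta>" using ff_strict_mono_upper[OF r, of ?q s] s t q by simp
      then have "1 - ff r s / \<beta> < 0" using beta by simp
      moreover have "3 * (1 - r - 3 * s) < 0" using D[of s] s q by simp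
      ultimately have "3 * (1 - r - 3 * s) * (1 - ff r s / \<beta>) > 0"
        by (simp add: mult_neg_neg)
      then show "\<exists>y. (Fdiag \<beta> r has_real_derivative y) (at s) \<and> 0 < y"
        using deriv[of s] s t q by auto
    qed (use cont t q in auto)
  qed
qed

lemma tstar_spec:
  "1/3 < tstar \<beta> \<and> tstar \<beta> \<le> 1/2 \<and> (\<forall>t\<in>{1/3..1/2}. Fdiag \<beta> 0 (tstar \<beta>) \<le> Fdiag \<beta> 0 t)"
proof -
  obtain ts where ts: "ts \<in> {1/3..1/2::real}" "\<forall>t\<in>{1/3..1/2}. Fdiag \<beta> 0 ts \<le> Fdiag \<beta> 0 t"
    using continuous_attains_inf[of "{1/3..1/2::real}" "Fdiag \<beta> 0"]
      continuous_on_subset[OF continuous_on_Fdiag[of \<beta> 0], of "{1/3..1/2}"] by auto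
  define t2 where "t2 = (1/3 + (1 - ll \<beta>)/2)/2"
  have t2: "1/3 < t2" "t2 < (1 - ll \<beta>)/2" "t2 < 1/2"
    using ll_less_third ll_pos unfolding t2_def by (simp_all add: field_simps)
  have "Fdiag \<beta> 0 (1/3) > Fdiag \<beta> 0 t2"
  proof (rule DERIV_neg_imp_decreasing_open[OF t2(1)])
    fix s assume s: "1/3 < s" "s < t2"
    have s12: "0 < 1 - 2 * s" using s t2 by simp
    have "ln (s/(1-2 * s)) \<le> s/(1-2 * s) - 1" using s s12 by (intro ln_le_minus_one) simp
    moreover have "ln (s/(1-2 * s)) = - lnratio s" using s s12 by (simp add: lnratio_def ln_div)
    moreover have "s/(1-2 * s) - 1 = (3 * s - 1)/(1-2 * s)" using s12 by (simp add: field_simps)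
    ultimately have L: "- lnratio s \<le> (3 * s - 1)/(1-2 * s)" by simp
    have "1 - 2 * s > ll \<beta>" using s t2 by simp
    then have "2 / (\<beta> * (1 - 2 * s)) < 3" using beta s12 by (simp add: ll_def field_simps)
    then have "(2 / (\<beta> * (1 - 2 * s))) * (3 * s - 1) < 3 * (3 * s - 1)"
      using s by (intro mult_strict_right_mono) auto
    then have "(2/\<beta>) * ((3 * s - 1)/(1-2 * s)) < 3 * (3 * s - 1)" by simp
    moreover have "(2/\<beta>) * (- lnratio s) \<le> (2/\<beta>) * ((3 * s - 1)/(1-2 * s))"
      using L beta by (intro mult_left_mono) auto
    ultimately have "3 * (1 - 0 - 3 * s) - (2/\<beta>) * lnratio s < 0" by (simp add: algebra_simps)
    then show "\<exists>y. (Fdiag \<beta> 0 has_real_derivative y) (at s) \<and> y < 0"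
      using s t2 beta by (intro exI[of _ "3 * (1 - 0 - 3 * s) - (2/\<beta>) * lnratio s"] conjI DERIV_Fdiag) auto
  next
    show "continuous_on {1/3..t2} (Fdiag \<beta> 0)"
      by (rule continuous_on_subset[OF continuous_on_Fdiag]) (use t2 in auto)
  qed
  moreover have "Fdiag \<beta> 0 ts \<le> Fdiag \<beta> 0 t2" using ts t2 by auto
  ultimately have "ts \<noteq> 1/3" by (metis order.strict_iff_not)
  then have "1/3 < ts" "ts \<le> 1/2" using ts by auto
  then have "\<exists>ts. 1/3 < ts \<and> ts \<le> 1/2 \<and> (\<forall>t\<in>{1/3..1/2}. Fdiag \<beta> 0 ts \<le> Fdiag \<beta> 0 t)"
    using ts(2) by blast
  then show ?thesis unfolding tstar_def by (rule someI_ex)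
qed

lemma h0_less_Fdiag_tstar: assumes r: "r > 0" shows "h0 \<beta> r < Fdiag \<beta> 0 (tstar \<beta>)"
proof -
  have t: "1/3 < tstar \<beta>" "tstar \<beta> \<le> 1/2" using tstar_spec by auto
  have "h0 \<beta> r \<le> Fdiag \<beta> r (tstar \<beta>)"
    using Fdiag_strict_min_qb[OF r, of "tstar \<beta>"] t unfolding h0_eq_Fdiag
    by (cases "tstar \<beta> = qb \<beta> r") auto
  also have "\<dots> = Fdiag \<beta> 0 (tstar \<beta>) + r * (1 - 3 * tstar \<beta>)" by (rule Fdiag_field)
  also have "\<dots> < Fdiag \<beta> 0 (tstar \<beta>)" using r t by (simp add: mult_pos_neg)
  finally show ?thesis .
qed

lemma h0_ge_Fdiag_tstar: assumes r: "r > 0" shows "h0 \<beta> r \<ge> Fdiag \<beta> 0 (tstar \<beta>) - r/2"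
proof -
  have q: "1/3 < qb \<beta> r" "qb \<beta> r < 1/2" using qb_root[OF r] by auto
  have "Fdiag \<beta> 0 (tstar \<beta>) \<le> Fdiag \<beta> 0 (qb \<beta> r)" using tstar_spec q by simp
  moreover have "h0 \<beta> r = Fdiag \<beta> 0 (qb \<beta> r) + r * (1 - 3 * qb \<beta> r)"
    unfolding h0_eq_Fdiag by (rule Fdiag_field)
  moreover have "r * (1 - 3 * qb \<beta> r) \<ge> r * (-1/2)" using q r by (intro mult_left_mono) auto
  ultimately show ?thesis by simp
qed
end

section \<open>Uniqueness of y2\<close>

context beta_gt_two
begin

lemma y2_equation_root_shape:
  assumes r: "r > 0" and y: "y \<le> gg \<beta>" and eq: "HH \<beta> (y - 3*r/2) + HH \<beta> y + KK \<beta> y = 1"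
  defines "t \<equiv> 3*\<beta>/2 * (KK \<beta> y - HH \<beta> y)"
  shows "y < gg \<beta> \<and> 0 < HH \<beta> (y - 3*r/2) \<and> HH \<beta> (y - 3*r/2) < HH \<beta> y \<and> HH \<beta> y < ll \<beta>
     \<and> KK \<beta> y = HH \<beta> y + t / (3*\<beta>/2) \<and> HH \<beta> y = rho t / (3*\<beta>/2) \<and> 3/2 < t"
proof -
  define x z x' where "x = HH \<beta> y" and "z = KK \<beta> y" and "x' = HH \<beta> (y - 3*r/2)"
  have hx: "0 < x" "x \<le> ll \<beta>" "GG \<beta> x = y" using HH_spec[OF y] by (auto simp: x_def)
  have hz: "ll \<beta> \<le> z" "GG \<beta> z = y" using KK_spec[OF y] by (auto simp: z_def)
  have hx': "0 < x'" "x' \<le> ll \<beta>" using HH_spec[of "y - 3*r/2"] y r by (simp_all add: x'_def)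
  have sum: "x' + x + z = 1" using eq by (simp add: x_def z_def x'_def)
  have ygg: "y < gg \<beta>"
  proof (rule ccontr)
    assume "\<not> y < gg \<beta>"
    then have "x = ll \<beta>" "z = ll \<beta>"
      using y HH_eq[of "ll \<beta>" y] KK_eq[of "ll \<beta>" y] ll_pos by (simp_all add: x_def z_def gg_def)
    then show False using sum hx' ll_less_third by linarith
  qed
  have xl: "x < ll \<beta>" using hx ygg by (cases "x = ll \<beta>") (auto simp: gg_def)
  have zl: "ll \<beta> < z" using hz ygg by (cases "z = ll \<beta>") (auto simp: gg_def)
  have x'x: "x' < x" using HH_strict_mono[of "y - 3*r/2" y] r ygg by (simp add: x_def x'_def)
  have tdef: "t = 3*\<beta>/2 * (z - x)" by (simp add: t_def x_def z_def)
  have "3*\<beta>/2 * (z - x) > 0" using xl zl beta by simp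
  then have tpos: "t > 0" using tdef by simp
  have "ln z / \<beta> - 3/2 * z = ln x / \<beta> - 3/2 * x" using hx hz by (simp add: GG_alt)
  then have "ln z = t + ln x" using beta tdef by (simp add: field_simps)
  then have "z = exp (t + ln x)" using hz ll_pos by (metis exp_ln order.strict_trans2)
  then have "z = x * exp t" using hx by (simp add: exp_add)
  moreover have zt: "z = x + t / (3*\<beta>/2)" using tdef beta by (simp add: field_simps)
  ultimately have "x * (exp t - 1) = t / (3*\<beta>/2)" by (simp add: algebra_simps)
  then have xr: "x = rho t / (3*\<beta>/2)" using tpos beta by (simp add: rho_def field_simps)
  have "3/2 < t"
  proof (rule ccontr)
    assume "\<not> 3/2 < t"
    then have "(3 * rho t + t) / (3*\<beta>/2) \<le> 3 / (3*\<beta>/2)"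
      using three_rho_plus_le_three[of t] tpos beta by (intro divide_right_mono) auto
    moreover have "1 < 3 * x + t / (3*\<beta>/2)" using sum x'x zt by linarith
    moreover have "3 * x + t / (3*\<beta>/2) = (3 * rho t + t) / (3*\<beta>/2)"
      by (subst xr) (simp add: add_divide_distrib)
    ultimately have "1 < 3 / (3*\<beta>/2)" by linarith
    then show False using beta by (simp add: field_simps)
  qed
  then show ?thesis using ygg hx' x'x xl zt xr by (simp add: x_def z_def x'_def)
qed

lemma GG_increment_antimono:
  assumes "0 < p1" "p1 < p2" "d > 0"
  shows "GG \<beta> (p2 + d) - GG \<beta> p2 \<le> GG \<beta> (p1 + d) - GG \<beta> p1"
proof -
  have "ln ((p2 + d)/p2) \<le> ln ((p1 + d)/p1)"
    using assms by (subst ln_le_cancel_iff) (auto simp: field_simps intro!: mult_left_mono)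
  then have "(ln (p2 + d) - ln p2) / \<beta> \<le> (ln (p1 + d) - ln p1) / \<beta>"
    using assms beta by (simp add: ln_div divide_right_mono)
  then show ?thesis using GG_diff[of "p2 + d" p2] GG_diff[of "p1 + d" p1] by simp
qed

lemma HH_shift_diff_le:
  assumes y: "ya < yb" "yb \<le> gg \<beta>" and c: "c > 0"
  shows "HH \<beta> (yb - c) - HH \<beta> (ya - c) \<le> HH \<beta> yb - HH \<beta> ya"
proof (rule ccontr)
  define xa xb xa' xb' where "xa = HH \<beta> ya" and "xb = HH \<beta> yb"
    and "xa' = HH \<beta> (ya - c)" and "xb' = HH \<beta> (yb - c)"
  have G: "GG \<beta> xa = ya" "GG \<beta> xb = yb" "GG \<beta> xa' = ya - c" "GG \<beta> xb' = yb - c"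
    and pos: "0 < xa'" and hb: "xb' \<le> ll \<beta>"
    using HH_spec[of ya] HH_spec[of yb] HH_spec[of "ya - c"] HH_spec[of "yb - c"] y c
    unfolding xa_def xb_def xa'_def xb'_def by auto
  have "xa' < xa" "xa < xb"
    using HH_strict_mono[of "ya - c" ya] HH_strict_mono[OF y] y c by (auto simp: xa_def xb_def xa'_def)
  assume "\<not> HH \<beta> (yb - c) - HH \<beta> (ya - c) \<le> HH \<beta> yb - HH \<beta> ya"
  then have d: "xb - xa > 0" "xa' + (xb - xa) < xb'" using \<open>xa < xb\<close> by (auto simp: xa_def xb_def xa'_def xb'_def)
  have "GG \<beta> (xa + (xb - xa)) - GG \<beta> xa \<le> GG \<beta> (xa' + (xb - xa)) - GG \<beta> xa'"
    using pos \<open>xa' < xa\<close> d by (intro GG_increment_antimono) auto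
  moreover have "GG \<beta> (xa' + (xb - xa)) < GG \<beta> xb'"
    using GG_strict_mono[OF _ d(2) hb] pos d by simp
  ultimately show False using G by simp
qed

text \<open>Via the parametrization by t, a second root would contradict the monotonicity of
  t + 3 rho t on (3/2, oo).\<close>

lemma y2_equation_root_unique:
  assumes r: "r > 0" and y: "ya < yb" "yb \<le> gg \<beta>"
    and eq: "HH \<beta> (ya - 3*r/2) + HH \<beta> ya + KK \<beta> ya = 1" "HH \<beta> (yb - 3*r/2) + HH \<beta> yb + KK \<beta> yb = 1"
  shows False
proof -
  define a where "a = 3*\<beta>/2"
  define xa xb za zb ta tb where "xa = HH \<beta> ya" and "xb = HH \<beta> yb" and "za = KK \<beta> ya"
    and "zb = KK \<beta> yb" and "ta = a * (za - xa)" and "tb = a * (zb - xb)"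
  have A: "za = xa + ta / a" "xa = rho ta / a"
    using y2_equation_root_shape[OF r _ eq(1)] y unfolding xa_def za_def ta_def a_def by auto
  have B: "zb = xb + tb / a" "xb = rho tb / a" "3/2 < tb"
    using y2_equation_root_shape[OF r y(2) eq(2)] unfolding xb_def zb_def tb_def a_def by auto
  have "xa < xb" unfolding xa_def xb_def by (rule HH_strict_mono[OF y])
  moreover have "zb < za" unfolding za_def zb_def by (rule KK_strict_antimono[OF y])
  ultimately have tab: "tb < ta" using beta by (simp add: ta_def tb_def a_def)
  have "HH \<beta> (yb - 3*r/2) - HH \<beta> (ya - 3*r/2) \<le> xb - xa"
    using HH_shift_diff_le[OF y, of "3*r/2"] r by (simp add: xa_def xb_def)
  then have "(ta + 3 * rho ta) / a \<le> (tb + 3 * rho tb) / a"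
    using eq A B unfolding add_divide_distrib xa_def xb_def za_def zb_def by argo
  then have "ta + 3 * rho ta \<le> tb + 3 * rho tb" using beta by (simp add: a_def divide_le_cancel)
  then show False using plus_three_rho_strict_mono[of tb ta] B(3) tab by simp
qed

lemma y2_eq:
  assumes r: "r > 0" and y: "y \<le> gg \<beta>" and eq: "HH \<beta> (y - 3*r/2) + HH \<beta> y + KK \<beta> y = 1"
  shows "y2 \<beta> r = y"
  unfolding y2_def
proof (rule the_equality)
  fix y' assume y': "y' \<le> gg \<beta> \<and> HH \<beta> (y' - 3 * r / 2) + HH \<beta> y' + KK \<beta> y' = 1"
  show "y' = y"
    using y2_equation_root_unique[OF r, of y' y] y2_equation_root_unique[OF r, of y y'] y y' eq
    by (cases y' y rule: linorder_cases) auto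
qed (use y eq in auto)
end

section \<open>Barriers between the regions\<close>

context beta_gt_two
begin

lemma Fb_gt_h0_x0_eq_x1:
  assumes r: "r > 0" and p: "p \<in> Xi" "1 - fst p - snd p = fst p" "snd p \<le> fst p"
  shows "h0 \<beta> r < Fb \<beta> p r"
proof -
  obtain a where pa: "p = (a, 1 - 2*a)" using p(2) by (cases p) (auto simp: algebra_simps)
  have a: "1/3 \<le> a" "a \<le> 1/2" using p pa by (auto simp: Xi_def)
  have "Fb \<beta> p 0 = Fdiag \<beta> 0 a"
    unfolding Fb_eq_Fbar Fdiag_def pa by (simp add: Fbar_swap02[of \<beta> 0 0 0 a] algebra_simps)
  moreover have "Fb \<beta> p r \<ge> Fb \<beta> p 0" using Fb_field[of \<beta> p r] pa r a by simp
  moreover have "Fdiag \<beta> 0 a \<ge> Fdiag \<beta> 0 (tstar \<beta>)" using tstar_spec a by simp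
  ultimately show ?thesis using h0_less_Fdiag_tstar[OF r] by simp
qed

lemma Fb_gt_h0_diagonal:
  assumes r: "r > 0" and p: "p \<in> Xi" "fst p = snd p" "1 - fst p - snd p \<le> fst p"
    and ne: "p \<noteq> sigma0 \<beta> r"
  shows "h0 \<beta> r < Fb \<beta> p r"
proof -
  obtain a where pa: "p = (a, a)" using p(2) by (cases p) auto
  have "1/3 \<le> a" "a \<le> 1/2" "a \<noteq> qb \<beta> r" using p pa ne by (auto simp: Xi_def sigma0_def)
  then show ?thesis using Fdiag_strict_min_qb[OF r] by (simp add: pa h0_eq_Fdiag Fb_diag)
qed

lemma Fb_gt_h0_outside_regions:
  assumes r: "r > 0" and p: "p \<in> Xi" "p \<notin> \<Union>regions" "p \<noteq> sigma0 \<beta> r"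
  shows "h0 \<beta> r < Fb \<beta> p r"
  using p(2) unfolding not_in_Union_regions
proof (elim disjE conjE)
  assume "1 - fst p - snd p = snd p" "fst p \<le> snd p"
  then have "h0 \<beta> r < Fb \<beta> (swap12 p) r"
    using p(1) by (intro Fb_gt_h0_x0_eq_x1[OF r]) (auto simp: swap12_def Xi_def)
  then show ?thesis by (simp add: Fb_swap12)
next
  assume "1 - fst p - snd p = fst p" "snd p \<le> fst p"
  then show ?thesis by (rule Fb_gt_h0_x0_eq_x1[OF r p(1)])
next
  assume "fst p = snd p" "1 - fst p - snd p \<le> fst p"
  then show ?thesis by (rule Fb_gt_h0_diagonal[OF r p(1) _ _ p(3)])
qed

lemma sublevel_subset_regions:
  assumes r: "r > 0" shows "sublevel \<beta> r \<subseteq> \<Union>regions"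
proof
  fix x assume x: "x \<in> sublevel \<beta> r"
  then have X: "x \<in> Xi" and F: "Fb \<beta> x r < h0 \<beta> r" by (auto simp: sublevel_def)
  then have "x \<noteq> sigma0 \<beta> r" by (auto simp: h0_def)
  then show "x \<in> \<Union>regions"
    using Fb_gt_h0_outside_regions[OF r X] F by fastforce
qed

lemma connected_component_sublevel_subset_region:
  assumes r: "r > 0" and A: "A \<in> regions" and m: "m \<in> sublevel \<beta> r" "m \<in> A"
  shows "connected_component_set (sublevel \<beta> r) m \<subseteq> A"
proof (rule connected_subset_disjoint_open_Un)
  show "connected_component_set (sublevel \<beta> r) m \<subseteq> A \<union> \<Union>(regions - {A})"
    using sublevel_subset_regions[OF r] connected_component_subset by blast
  show "open (\<Union>(regions - {A}))" using open_regions by blast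
  show "A \<inter> \<Union>(regions - {A}) = {}" using regions_disjoint A by blast
  show "connected_component_set (sublevel \<beta> r) m \<inter> A \<noteq> {}"
    using m connected_component_refl[of m "sublevel \<beta> r"] by blast
qed (use A open_regions in auto)

lemma closure_components_inter_subset:
  assumes r: "r > 0" and W: "W \<subseteq> sublevel \<beta> r" "W \<subseteq> A" and W': "W' \<subseteq> A'"
    and A: "A \<in> regions" "A' \<in> regions" "A \<inter> A' = {}"
  shows "closure W \<inter> closure W' \<subseteq> {sigma0 \<beta> r}"
proof
  fix z assume z: "z \<in> closure W \<inter> closure W'"
  then have zA: "z \<in> closure A" "z \<in> closure A'" using closure_mono[OF W(2)] closure_mono[OF W'] by auto
  have meets: "C \<inter> B \<noteq> {}" if "C \<in> regions" "z \<in> C" "z \<in> closure B" for C B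
    using open_Int_closure_eq_empty[OF open_regions[OF that(1)], of B] that by auto
  have "z \<notin> \<Union>regions"
  proof
    assume "z \<in> \<Union>regions"
    then obtain C where C: "C \<in> regions" "z \<in> C" by blast
    have "C = A" using meets[OF C zA(1)] regions_disjoint[OF C(1) A(1)] by blast
    moreover have "C = A'" using meets[OF C zA(2)] regions_disjoint[OF C(1) A(2)] by blast
    ultimately show False using A(3) C(2) by blast
  qed
  moreover have "z \<in> Xi" "Fb \<beta> z r \<le> h0 \<beta> r" using z closure_component_sublevel_subset[OF W(1)] by auto
  ultimately have "z = sigma0 \<beta> r" using Fb_gt_h0_outside_regions[OF r, of z] by fastforce
  then show "z \<in> {sigma0 \<beta> r}" by simp
qed
end

section \<open>Identification of the local minimizers\<close>

context beta_gt_two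
begin

text \<open>A local minimum of the diagonal energy below 1/3 is a root of ff r t = beta; it cannot lie
  above m0 r, where ff r increases past beta and the energy keeps decreasing to the right.\<close>

lemma Fdiag_local_min_imp_pb:
  assumes r: "0 < r" "r \<le> 1/4" and t: "0 < t" "t < 1/3" and d: "d > 0"
    and lm: "\<And>s. \<bar>t - s\<bar> < d \<Longrightarrow> Fdiag \<beta> r t \<le> Fdiag \<beta> r s"
  shows "pb \<beta> r = t"
proof -
  note M = ff_num_sign_m0[OF r]
  have "(Fdiag \<beta> r has_real_derivative (3 * (1 - r - 3*t) - (2/\<beta>) * lnratio t)) (at t)"
    using t beta by (intro DERIV_Fdiag) auto
  then have "3 * (1 - r - 3*t) - (2/\<beta>) * lnratio t = 0"
    by (rule DERIV_local_min[OF _ d]) (use lm in auto)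
  moreover have "(2/\<beta>) * lnratio t > 0" using lnratio_pos[OF t] beta by simp
  ultimately have D: "1 - r - 3*t > 0" by simp
  then have tk: "t < kk r" by (simp add: kk_def)
  have ft: "ff r t = \<beta>"
    using \<open>3 * (1 - r - 3*t) - (2/\<beta>) * lnratio t = 0\<close> D beta by (simp add: ff_eq field_simps)
  have tm: "t < m0 r"
  proof (rule ccontr)
    assume "\<not> t < m0 r"
    then have tm: "m0 r \<le> t" by simp
    define s1 where "s1 = t + min (d/2) ((kk r - t)/2)"
    have "min (d/2) ((kk r - t)/2) > 0" "min (d/2) ((kk r - t)/2) \<le> d/2"
      "min (d/2) ((kk r - t)/2) \<le> (kk r - t)/2"
      using d tk by (simp_all only: min.cobounded1 min.cobounded2) simp
    then have s1: "t < s1" "s1 < t + d" "s1 < kk r" using d tk unfolding s1_def by argo+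
    have "Fdiag \<beta> r t > Fdiag \<beta> r s1"
    proof (rule DERIV_neg_imp_decreasing_open[OF s1(1)])
      fix s assume s: "t < s" "s < s1"
      have "ff r s > \<beta>" using ff_strict_mono_above_m0[OF r tm, of s] s s1 ft by simp
      then have "1 - ff r s / \<beta> < 0" using beta by simp
      moreover have "3 * (1 - r - 3 * s) > 0" using s s1 by (simp add: kk_def)
      ultimately have "3 * (1 - r - 3 * s) * (1 - ff r s / \<beta>) < 0" by (simp add: mult_pos_neg)
      moreover have "(Fdiag \<beta> r has_real_derivative (3 * (1 - r - 3 * s) * (1 - ff r s / \<beta>))) (at s)"
        using s s1 t beta M r by (intro DERIV_Fdiag_ff) (auto simp: kk_def)
      ultimately show "\<exists>y. (Fdiag \<beta> r has_real_derivative y) (at s) \<and> y < 0" by blast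
    next
      show "continuous_on {t..s1} (Fdiag \<beta> r)"
        by (rule continuous_on_subset[OF continuous_on_Fdiag]) (use t s1 M r in \<open>auto simp: kk_def\<close>)
    qed
    then show False using lm[of s1] s1 by simp
  qed
  show ?thesis
    unfolding pb_def
  proof (rule the_equality)
    fix s assume s: "0 < s \<and> s < m0 r \<and> ff r s = \<beta>"
    show "s = t"
      using ff_strict_antimono_below_m0[OF r, of s t] ff_strict_antimono_below_m0[OF r, of t s] s t tm ft
      by (cases s t rule: linorder_cases) auto
  qed (use t tm ft in auto)
qed

lemma local_min_region2_eq_mvec1:
  assumes r: "r > 0" and P: "P \<in> Xi" "P \<in> region2" and e: "\<epsilon> > 0"
    and H: "\<forall>y\<in>Xi. dist y P < \<epsilon> \<longrightarrow> Fb \<beta> P r \<le> Fb \<beta> y r"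
  shows "P = mvec1 \<beta> r"
proof -
  define x0 x1 x2 where "x0 = 1 - fst P - snd P" and "x1 = fst P" and "x2 = snd P"
  have lm: "Fbar_local_min \<beta> r (-r/2) (-r/2) x0 x1 x2"
    unfolding x0_def x1_def x2_def by (rule local_min_Fb_imp_Fbar_local_min[OF P(1) e H])
  have nn: "x0 \<ge> 0" "x1 \<ge> 0" "x2 \<ge> 0" "x0 + x1 + x2 = 1"
    using P(1) unfolding x0_def x1_def x2_def Xi_def by auto
  note C = Fbar_local_min_interior_critical[OF lm nn]
  have o: "x1 < x2" "x0 < x2" using P(2) unfolding region2_def x0_def x1_def x2_def by auto
  have g12: "GG \<beta> x1 = GG \<beta> x2" and g0: "GG \<beta> x0 = GG \<beta> x1 - 3*r/2" using C by simp_all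
  have x1l: "x1 < ll \<beta>" using GG_strict_antimono[of x1 x2] o g12 by force
  have x2l: "ll \<beta> < x2" using GG_strict_mono[of x1 x2] o C g12 by force
  have x0l: "x0 < ll \<beta>" using GG_strict_antimono[of x0 x2] o g12 g0 r by force
  define y where "y = GG \<beta> x1"
  have "HH \<beta> y = x1" "KK \<beta> y = x2" "HH \<beta> (y - 3*r/2) = x0"
    using HH_eq[of x1 y] KK_eq[of x2 y] HH_eq[of x0 "y - 3*r/2"] C x1l x2l x0l g12 g0
    by (simp_all add: y_def)
  moreover have "y2 \<beta> r = y"
    using calculation nn GG_le_gg[of x1] C by (intro y2_eq[OF r]) (auto simp: y_def)
  ultimately show ?thesis by (simp add: mvec1_def x1_def x2_def)
qed

text \<open>Off the diagonal the larger of x1, x2 would exceed ll (equal potentials GG x1 = GG x2), and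
  so would x0 > x1, x2, which is excluded.\<close>

lemma Fbar_local_min_region0_diagonal:
  assumes lm: "Fbar_local_min \<beta> r (-r/2) (-r/2) x0 x1 x2"
    and nn: "x0 \<ge> 0" "x1 \<ge> 0" "x2 \<ge> 0" "x0 + x1 + x2 = 1" and o: "x1 < x0" "x2 < x0"
  shows "x1 = x2"
proof (rule ccontr)
  note C = Fbar_local_min_interior_critical[OF lm nn]
  assume "x1 \<noteq> x2"
  then consider "x1 < x2" | "x2 < x1" by linarith
  then show False
  proof cases
    case 1
    then have "ll \<beta> < x2" using GG_strict_mono[of x1 x2] C by force
    then show False
      using not_Fbar_local_min_two_above_ll[OF Fbar_local_min_swap12[OF lm]] C o nn by simp
  next
    case 2
    then have "ll \<beta> < x1" using GG_strict_mono[of x2 x1] C by force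
    then show False using not_Fbar_local_min_two_above_ll[OF lm] C o nn by simp
  qed
qed

lemma local_min_region0_eq_mvec0:
  assumes r: "0 < r" "r \<le> 1/4" and P: "P \<in> Xi" "P \<in> region0" and e: "\<epsilon> > 0"
    and H: "\<forall>y\<in>Xi. dist y P < \<epsilon> \<longrightarrow> Fb \<beta> P r \<le> Fb \<beta> y r"
  shows "P = mvec0 \<beta> r"
proof -
  define x0 x1 x2 where "x0 = 1 - fst P - snd P" and "x1 = fst P" and "x2 = snd P"
  have lm: "Fbar_local_min \<beta> r (-r/2) (-r/2) x0 x1 x2"
    unfolding x0_def x1_def x2_def by (rule local_min_Fb_imp_Fbar_local_min[OF P(1) e H])
  have nn: "x0 \<ge> 0" "x1 \<ge> 0" "x2 \<ge> 0" "x0 + x1 + x2 = 1"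
    using P(1) unfolding x0_def x1_def x2_def Xi_def by auto
  have o: "x1 < x0" "x2 < x0" using P(2) unfolding region0_def x0_def x1_def x2_def by auto
  have "x1 = x2" by (rule Fbar_local_min_region0_diagonal[OF lm nn o])
  then have Pt: "P = (x1, x1)" by (cases P) (simp add: x1_def x2_def)
  have t: "0 < x1" "x1 < 1/3"
    using Fbar_local_min_interior_critical[OF lm nn] o nn \<open>x1 = x2\<close> by auto
  define d where "d = min \<epsilon> (min x1 (1/2 - x1)) / 2"
  have d: "0 < d" "d \<le> \<epsilon>/2" "d < x1" "d < 1/2 - x1" using e t by (auto simp: d_def)
  have "Fdiag \<beta> r x1 \<le> Fdiag \<beta> r s" if s: "\<bar>x1 - s\<bar> < d" for s
  proof -
    have "(s, s) \<in> Xi" using s d by (auto simp: Xi_def abs_if split: if_splits)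
    moreover have "dist (s, s) P \<le> \<bar>s - x1\<bar> + \<bar>s - x1\<bar>"
      using norm_Pair_le[of "s - x1" "s - x1"] by (simp add: Pt dist_norm)
    then have "dist (s, s) P < \<epsilon>" using s d abs_minus_commute[of x1 s] by linarith
    ultimately show ?thesis using H Pt by (force simp: Fb_diag)
  qed
  then have "pb \<beta> r = x1" by (intro Fdiag_local_min_imp_pb[OF r t d(1)])
  then show ?thesis using Pt by (simp add: mvec0_def)
qed
end

section \<open>The components of mvec0, mvec1 and mvec2\<close>

context beta_gt_two
begin

lemma mvec1_in_component:
  assumes r: "r > 0" and x: "x \<in> sublevel \<beta> r" "x \<in> region2"
  shows "mvec1 \<beta> r \<in> connected_component_set (sublevel \<beta> r) x"
proof -
  define W where "W = connected_component_set (sublevel \<beta> r) x"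
  have WR: "W \<subseteq> region2"
    unfolding W_def by (rule connected_component_sublevel_subset_region[OF r _ x]) (simp add: regions_def)
  obtain P \<epsilon> where P: "P \<in> W" "\<epsilon> > 0" "\<forall>y\<in>Xi. dist y P < \<epsilon> \<longrightarrow> Fb \<beta> P r \<le> Fb \<beta> y r"
    using connected_component_sublevel_contains_local_min[OF compact_Xi convex_Xi continuous_on_Fb[of \<beta> r], of x "h0 \<beta> r"]
      x unfolding W_def sublevel_def by auto
  have "P \<in> Xi" using P(1) connected_component_subset unfolding W_def sublevel_def by blast
  then have "P = mvec1 \<beta> r" using P WR by (intro local_min_region2_eq_mvec1[OF r]) auto
  then show ?thesis using P(1) by (simp add: W_def)
qed

lemma mvec0_in_component:
  assumes r: "0 < r" "r \<le> 1/4" and x: "x \<in> sublevel \<beta> r" "x \<in> region0"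
  shows "mvec0 \<beta> r \<in> connected_component_set (sublevel \<beta> r) x"
proof -
  define W where "W = connected_component_set (sublevel \<beta> r) x"
  have WR: "W \<subseteq> region0"
    unfolding W_def by (rule connected_component_sublevel_subset_region[OF r(1) _ x]) (simp add: regions_def)
  obtain P \<epsilon> where P: "P \<in> W" "\<epsilon> > 0" "\<forall>y\<in>Xi. dist y P < \<epsilon> \<longrightarrow> Fb \<beta> P r \<le> Fb \<beta> y r"
    using connected_component_sublevel_contains_local_min[OF compact_Xi convex_Xi continuous_on_Fb[of \<beta> r], of x "h0 \<beta> r"]
      x unfolding W_def sublevel_def by auto
  have "P \<in> Xi" using P(1) connected_component_subset unfolding W_def sublevel_def by blast
  then have "P = mvec0 \<beta> r" using P WR by (intro local_min_region0_eq_mvec0[OF r]) auto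
  then show ?thesis using P(1) by (simp add: W_def)
qed

lemma qb_split_in_sublevel_region2:
  assumes r: "r > 0" and u: "0 < u" "u < qb \<beta> r - ll \<beta>"
  shows "(qb \<beta> r - u, qb \<beta> r + u) \<in> sublevel \<beta> r" "(qb \<beta> r - u, qb \<beta> r + u) \<in> region2"
proof -
  define q where "q = qb \<beta> r"
  have q: "1/3 < q" "q < 1/2" using qb_root[OF r] by (auto simp: q_def)
  have "Fb \<beta> (q - u, q + u) r = Fbar \<beta> r (-r/2) (-r/2) (1 - 2*q) (q - u) (q + u)"
    by (simp add: Fb_eq_Fbar algebra_simps)
  also have "\<dots> < Fbar \<beta> r (-r/2) (-r/2) (1 - 2*q) q q"
    by (rule Fbar_split_strict_less) (use u q ll_pos in \<open>auto simp: q_def\<close>)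
  also have "\<dots> = h0 \<beta> r" by (simp add: h0_eq_Fdiag Fdiag_def q_def)
  finally show "(qb \<beta> r - u, qb \<beta> r + u) \<in> sublevel \<beta> r" "(qb \<beta> r - u, qb \<beta> r + u) \<in> region2"
    using u q ll_pos by (auto simp: sublevel_def Xi_def region2_def q_def)
qed

text \<open>The segment u \<mapsto> (q - u, q + u), q = qb, issues from sigma0 into region 2 below the level h0.\<close>

lemma mvec1_component:
  assumes r: "r > 0"
  shows "mvec1 \<beta> r \<in> sublevel \<beta> r" "mvec1 \<beta> r \<in> region2"
    and "sigma0 \<beta> r \<in> closure (connected_component_set (sublevel \<beta> r) (mvec1 \<beta> r))"
proof -
  define seg c where "seg = (\<lambda>u::real. (qb \<beta> r - u, qb \<beta> r + u))" and "c = qb \<beta> r - ll \<beta>"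
  have c: "c > 0" using qb_root[OF r] ll_less_third by (simp add: c_def)
  have seg_in: "seg u \<in> sublevel \<beta> r \<and> seg u \<in> region2" if "0 < u" "u < c" for u
    using qb_split_in_sublevel_region2[OF r, of u] that by (simp add: seg_def c_def)
  define W where "W = connected_component_set (sublevel \<beta> r) (seg (c/2))"
  have "seg ` {0<..<c} \<subseteq> W" unfolding W_def
    by (rule connected_component_maximal) (use seg_in c in \<open>auto simp: seg_def intro!: connected_continuous_image continuous_intros\<close>)
  moreover have "seg ` closure {0<..<c} \<subseteq> closure (seg ` {0<..<c})"
    by (rule continuous_image_closure_subset[of UNIV]) (auto simp: seg_def intro!: continuous_intros)
  moreover have "sigma0 \<beta> r = seg 0" "0 \<in> closure {0<..<c}" using c by (simp_all add: seg_def sigma0_def)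
  ultimately have "sigma0 \<beta> r \<in> closure W" using closure_mono by blast
  moreover have m1W: "mvec1 \<beta> r \<in> W"
    unfolding W_def using seg_in[of "c/2"] c by (intro mvec1_in_component[OF r]) auto
  ultimately show "sigma0 \<beta> r \<in> closure (connected_component_set (sublevel \<beta> r) (mvec1 \<beta> r))"
    by (simp add: W_def connected_component_eq)
  have "W \<subseteq> sublevel \<beta> r" by (simp add: W_def connected_component_subset)
  moreover have "W \<subseteq> region2"
    unfolding W_def using seg_in[of "c/2"] c
    by (intro connected_component_sublevel_subset_region[OF r]) (auto simp: regions_def)
  ultimately show "mvec1 \<beta> r \<in> sublevel \<beta> r" "mvec1 \<beta> r \<in> region2" using m1W by blast+
qed

text \<open>For r below the gap between F(w, 0) and the diagonal minimum, a fixed split point w of the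
  diagonal at tstar with x0 largest stays in the sublevel set.\<close>

lemma sublevel_meets_region0:
  "\<exists>\<epsilon>>0. \<epsilon> \<le> 1/4 \<and> (\<forall>r. 0 < r \<and> r < \<epsilon> \<longrightarrow> (\<exists>w. w \<in> sublevel \<beta> r \<and> w \<in> region0))"
proof -
  define ts u where "ts = tstar \<beta>" and "u = (tstar \<beta> - ll \<beta>)/2"
  have t: "1/3 < ts" "ts \<le> 1/2" using tstar_spec by (auto simp: ts_def)
  have u: "0 < u" "u < ts - ll \<beta>" using t ll_less_third by (auto simp: u_def ts_def)
  define w where "w = (ts - u, 1 - 2*ts)"
  have w: "w \<in> Xi" "w \<in> region0" using t u ll_pos by (auto simp: w_def Xi_def region0_def)
  have "Fb \<beta> w 0 = Fbar \<beta> 0 0 0 (1 - 2*ts) (ts - u) (ts + u)"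
    by (simp add: Fb_eq_Fbar w_def Fbar_swap02[of \<beta> 0 0 0 "ts + u"] algebra_simps)
  also have "\<dots> < Fbar \<beta> 0 0 0 (1 - 2*ts) ts ts"
    by (rule Fbar_split_strict_less) (use t u ll_pos in auto)
  finally have gap: "Fb \<beta> w 0 < Fdiag \<beta> 0 ts" by (simp add: Fdiag_def)
  define \<epsilon> where "\<epsilon> = min (1/4) ((Fdiag \<beta> 0 ts - Fb \<beta> w 0)/2)"
  have "w \<in> sublevel \<beta> r" if r: "0 < r" "r < \<epsilon>" for r
  proof -
    have "3 * (1 - fst w - snd w) - 1 \<le> 2" using w by (auto simp: Xi_def)
    then have "Fb \<beta> w r \<le> Fb \<beta> w 0 + r"
      using Fb_field[of \<beta> w r] mult_left_mono[of _ 2 r] r by fastforce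
    also have "\<dots> < Fdiag \<beta> 0 ts - r/2" using r by (simp add: \<epsilon>_def)
    also have "\<dots> \<le> h0 \<beta> r" using h0_ge_Fdiag_tstar[OF r(1)] by (simp add: ts_def)
    finally show ?thesis using w by (simp add: sublevel_def)
  qed
  moreover have "\<epsilon> > 0" "\<epsilon> \<le> 1/4" using gap by (auto simp: \<epsilon>_def)
  ultimately show ?thesis using w(2) by blast
qed

lemma components_mvec1_mvec2:
  assumes r: "r > 0"
  defines "W1 \<equiv> connected_component_set (sublevel \<beta> r) (mvec1 \<beta> r)"
    and "W2 \<equiv> connected_component_set (sublevel \<beta> r) (mvec2 \<beta> r)"
  shows "mvec1 \<beta> r \<in> sublevel \<beta> r" "mvec2 \<beta> r \<in> sublevel \<beta> r" "W1 \<subseteq> region2" "W2 \<subseteq> region1"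
    and "closure W1 \<inter> closure W2 = {sigma0 \<beta> r}"
proof -
  note m1 = mvec1_component[OF r]
  have m2: "mvec2 \<beta> r = swap12 (mvec1 \<beta> r)" by (simp add: swap12_def mvec1_def mvec2_def)
  show m2S: "mvec2 \<beta> r \<in> sublevel \<beta> r" unfolding m2 by (rule swap12_sublevel[OF m1(1)])
  have m2R: "mvec2 \<beta> r \<in> region1" using m1(2) by (simp add: m2 swap12_def region1_def region2_def)
  show "mvec1 \<beta> r \<in> sublevel \<beta> r" by (rule m1(1))
  show W1R: "W1 \<subseteq> region2"
    unfolding W1_def by (rule connected_component_sublevel_subset_region[OF r _ m1(1,2)]) (simp add: regions_def)
  show W2R: "W2 \<subseteq> region1"
    unfolding W2_def by (rule connected_component_sublevel_subset_region[OF r _ m2S m2R]) (simp add: regions_def)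
  have "swap12 ` W1 \<subseteq> W2" unfolding W2_def
  proof (rule connected_component_maximal)
    show "mvec2 \<beta> r \<in> swap12 ` W1" using m1(1) by (simp add: m2 W1_def)
    show "connected (swap12 ` W1)" unfolding W1_def swap12_def
      by (intro connected_continuous_image continuous_intros) simp
    show "swap12 ` W1 \<subseteq> sublevel \<beta> r"
      unfolding W1_def using connected_component_subset swap12_sublevel by blast
  qed
  moreover have "swap12 ` closure W1 \<subseteq> closure (swap12 ` W1)"
    by (rule continuous_image_closure_subset[of UNIV]) (auto simp: swap12_def intro!: continuous_intros)
  moreover have "swap12 (sigma0 \<beta> r) = sigma0 \<beta> r" by (simp add: swap12_def sigma0_def)
  moreover have s1: "sigma0 \<beta> r \<in> closure W1" using m1(3) by (simp add: W1_def)
  ultimately have "sigma0 \<beta> r \<in> closure W2" using closure_mono by (metis image_eqI subsetD)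
  moreover have "closure W1 \<inter> closure W2 \<subseteq> {sigma0 \<beta> r}"
  proof (rule closure_components_inter_subset[OF r _ W1R W2R])
    show "W1 \<subseteq> sublevel \<beta> r" unfolding W1_def by (rule connected_component_subset)
    show "region2 \<in> regions" "region1 \<in> regions" by (simp_all add: regions_def)
    show "region2 \<inter> region1 = {}" by (auto simp: region1_def region2_def)
  qed
  ultimately show "closure W1 \<inter> closure W2 = {sigma0 \<beta> r}" using s1 by blast
qed

lemma closure_component_region0_disjoint:
  assumes r: "r > 0" and W0: "W0 \<subseteq> sublevel \<beta> r" "W0 \<subseteq> region0"
    and W: "W \<in> components (sublevel \<beta> r)" "mvec1 \<beta> r \<in> W \<or> mvec2 \<beta> r \<in> W"
  shows "closure W0 \<inter> closure W = {}"
proof -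
  note M = components_mvec1_mvec2[OF r]
  obtain A where A: "A \<in> regions" "W \<subseteq> A" "region0 \<inter> A = {}"
    using W(2)
  proof
    assume "mvec1 \<beta> r \<in> W"
    then show thesis
      using M(3) component_eq_connected_component_set[OF W(1)]
      by (intro that[of region2]) (auto simp: regions_def region0_def region2_def)
  next
    assume "mvec2 \<beta> r \<in> W"
    then show thesis
      using M(4) component_eq_connected_component_set[OF W(1)]
      by (intro that[of region1]) (auto simp: regions_def region0_def region1_def)
  qed
  have "closure W0 \<inter> closure W \<subseteq> {sigma0 \<beta> r}"
    using A by (intro closure_components_inter_subset[OF r W0]) (auto simp: regions_def)
  moreover have "sigma0 \<beta> r \<notin> closure region0"
    using closure_region0_subset qb_root[OF r] by (auto simp: sigma0_def)
  then have "sigma0 \<beta> r \<notin> closure W0" using closure_mono[OF W0(2)] by blast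
  ultimately show ?thesis by blast
qed

lemma component_mvec0_separated:
  assumes r: "0 < r" "r \<le> 1/4" and x: "x \<in> sublevel \<beta> r" "x \<in> region0"
  shows "\<exists>W0\<in>components (sublevel \<beta> r). mvec0 \<beta> r \<in> W0 \<and>
           (\<forall>W\<in>components (sublevel \<beta> r). (mvec1 \<beta> r \<in> W \<or> mvec2 \<beta> r \<in> W) \<longrightarrow>
              closure W0 \<inter> closure W = {})"
proof (intro bexI[OF _ componentsI[OF x(1)]] conjI ballI impI)
  show "mvec0 \<beta> r \<in> connected_component_set (sublevel \<beta> r) x"
    by (rule mvec0_in_component[OF r x])
  have "connected_component_set (sublevel \<beta> r) x \<subseteq> region0"
    by (rule connected_component_sublevel_subset_region[OF r(1) _ x]) (simp add: regions_def)
  moreover fix W assume "W \<in> components (sublevel \<beta> r)" "mvec1 \<beta> r \<in> W \<or> mvec2 \<beta> r \<in> W"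
  ultimately show "closure (connected_component_set (sublevel \<beta> r) x) \<inter> closure W = {}"
    using closure_component_region0_disjoint[OF r(1) connected_component_subset] by blast
qed

end

theorem lemma5p12:
  fixes \<beta> :: real
  assumes "\<beta> > 2"
  shows "(\<forall>r>0. \<exists>W1\<in>components (sublevel \<beta> r). \<exists>W2\<in>components (sublevel \<beta> r).
            mvec1 \<beta> r \<in> W1 \<and> mvec2 \<beta> r \<in> W2 \<and>
            closure W1 \<inter> closure W2 = {sigma0 \<beta> r})
       \<and> (\<exists>\<epsilon>>0. \<forall>r. 0 < r \<and> r < \<epsilon> \<longrightarrow>
            (\<exists>W0\<in>components (sublevel \<beta> r). mvec0 \<beta> r \<in> W0 \<and>
              (\<forall>W\<in>components (sublevel \<beta> r).
                 (mvec1 \<beta> r \<in> W \<or> mvec2 \<beta> r \<in> W) \<longrightarrow> closure W0 \<inter> closure W = {})))"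
proof -
  interpret beta_gt_two \<beta> using assms by unfold_locales
  have "\<exists>W1\<in>components (sublevel \<beta> r). \<exists>W2\<in>components (sublevel \<beta> r).
          mvec1 \<beta> r \<in> W1 \<and> mvec2 \<beta> r \<in> W2 \<and> closure W1 \<inter> closure W2 = {sigma0 \<beta> r}"
    if r: "r > 0" for r
    using components_mvec1_mvec2[OF r]
    by (intro bexI[OF _ componentsI[of "mvec1 \<beta> r"]] bexI[OF _ componentsI[of "mvec2 \<beta> r"]]) auto
  moreover obtain \<epsilon> where \<epsilon>: "\<epsilon> > 0" "\<epsilon> \<le> 1/4"
    and x: "\<And>r. 0 < r \<Longrightarrow> r < \<epsilon> \<Longrightarrow> \<exists>x. x \<in> sublevel \<beta> r \<and> x \<in> region0"
    using sublevel_meets_region0 by blast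
  moreover have "\<exists>W0\<in>components (sublevel \<beta> r). mvec0 \<beta> r \<in> W0 \<and>
      (\<forall>W\<in>components (sublevel \<beta> r). (mvec1 \<beta> r \<in> W \<or> mvec2 \<beta> r \<in> W) \<longrightarrow>
         closure W0 \<inter> closure W = {})" if "0 < r" "r < \<epsilon>" for r
    using x[OF that] component_mvec0_separated[of r] that \<epsilon>(2) by auto
  ultimately show ?thesis by blast
qed

end
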